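(* For every equation $u_t+uu_x=A^2(t,x)u_{xx}+A^1(t,x)u_x$ of the class $\hat{\mathcal L}_1$, its maximal Lie invariance algebra has dimension at most $2$.
   Context: All functions are smooth. $\hat{\mathcal L}_1$ is the class of equations $u_t+uu_x=A^2(t,x)u_{xx}+A^1(t,x)u_x$ for $u(t,x)$ with smooth arbitrary elements $A^1,A^2$ satisfying $A^2\neq0$ and $A^1_{xx}\neq0$ (superscripts are indices). The maximal Lie invariance algebra is the algebra of all vector fields on $(t,x,u)$ generating one-parameter groups of point symmetries of the equation. *)

theory Defs
  imports "HOL-Analysis.Analysis"
begin

definition pder :: "('a::real_normed_vector \<Rightarrow> real) \<Rightarrow> 'a \<Rightarrow> 'a \<Rightarrow> real" where
  "pder f v p = frechet_derivative f (at p) v"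

coinductive smooth_on :: "'a::euclidean_space set \<Rightarrow> ('a \<Rightarrow> real) \<Rightarrow> bool" for S where
  "(\<forall>p\<in>S. f differentiable (at p)) \<Longrightarrow> (\<forall>i\<in>Basis. smooth_on S (pder f i)) \<Longrightarrow> smooth_on S f"

abbreviation "d_t2 f \<equiv> pder f ((1,0)::real\<times>real)"
abbreviation "d_x2 f \<equiv> pder f ((0,1)::real\<times>real)"
abbreviation "d_t f \<equiv> pder f ((1,0,0)::real\<times>real\<times>real)"
abbreviation "d_x f \<equiv> pder f ((0,1,0)::real\<times>real\<times>real)"
abbreviation "d_u f \<equiv> pder f ((0,0,1)::real\<times>real\<times>real)"

definition Dt1 :: "(real\<times>real\<times>real \<Rightarrow> real) \<Rightarrow> real \<Rightarrow> real \<Rightarrow> real \<Rightarrow> real \<Rightarrow> real" where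
  "Dt1 F t x u ut = d_t F (t,x,u) + ut * d_u F (t,x,u)"

definition Dx1 :: "(real\<times>real\<times>real \<Rightarrow> real) \<Rightarrow> real \<Rightarrow> real \<Rightarrow> real \<Rightarrow> real \<Rightarrow> real" where
  "Dx1 F t x u ux = d_x F (t,x,u) + ux * d_u F (t,x,u)"

definition Dxx :: "(real\<times>real\<times>real \<Rightarrow> real) \<Rightarrow> real \<Rightarrow> real \<Rightarrow> real \<Rightarrow> real \<Rightarrow> real \<Rightarrow> real" where
  "Dxx F t x u ux uxx = d_x (d_x F) (t,x,u) + 2 * ux * d_u (d_x F) (t,x,u)
      + ux^2 * d_u (d_u F) (t,x,u) + uxx * d_u F (t,x,u)"

definition eta_t where
  "eta_t tau xi eta t x u ut ux =
     Dt1 eta t x u ut - ut * Dt1 tau t x u ut - ux * Dt1 xi t x u ut"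

definition eta_x where
  "eta_x tau xi eta t x u ut ux =
     Dx1 eta t x u ux - ut * Dx1 tau t x u ux - ux * Dx1 xi t x u ux"

definition eta_xx where
  "eta_xx tau xi eta t x u ut ux utx uxx =
     Dxx eta t x u ux uxx - ut * Dxx tau t x u ux uxx - ux * Dxx xi t x u ux uxx
     - 2 * utx * Dx1 tau t x u ux - 2 * uxx * Dx1 xi t x u ux"

text \<open>Q^(2) applied to Delta = u_t + u u_x - A2 u_xx - A1 u_x.\<close>
definition prolonged_action where
  "prolonged_action A1 A2 (V :: real\<times>real\<times>real \<Rightarrow> real\<times>real\<times>real) t x u ut ux utx uxx =
    (let tau = (\<lambda>p. fst (V p)); xi = (\<lambda>p. fst (snd (V p))); eta = (\<lambda>p. snd (snd (V p))) in
       tau (t,x,u) * (- d_t2 A2 (t,x) * uxx - d_t2 A1 (t,x) * ux)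
     + xi (t,x,u) * (- d_x2 A2 (t,x) * uxx - d_x2 A1 (t,x) * ux)
     + eta (t,x,u) * ux
     + eta_t tau xi eta t x u ut ux
     + (u - A1 (t,x)) * eta_x tau xi eta t x u ut ux
     - A2 (t,x) * eta_xx tau xi eta t x u ut ux utx uxx)"

definition Omega :: "(real\<times>real) set \<Rightarrow> (real\<times>real\<times>real) set" where
  "Omega D = {(t,x,u). (t,x) \<in> D}"

definition lie_symmetry where
  "lie_symmetry D A1 A2 V \<longleftrightarrow>
     smooth_on (Omega D) (\<lambda>p. fst (V p)) \<and>
     smooth_on (Omega D) (\<lambda>p. fst (snd (V p))) \<and>
     smooth_on (Omega D) (\<lambda>p. snd (snd (V p))) \<and>
     (\<forall>t x u ut ux utx uxx. (t,x) \<in> D \<longrightarrow>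
        ut + u * ux = A2 (t,x) * uxx + A1 (t,x) * ux \<longrightarrow>
        prolonged_action A1 A2 V t x u ut ux utx uxx = 0)"

end

theory Submission
  imports Defs
begin

text \<open>Splitting the invariance condition with respect to the free jet variables shows that on
  every square in \<open>D\<close> a symmetry has the form
  \<open>\<tau>(t) \<partial>\<^sub>t + ((\<tau>'(t) + k) x + \<beta>(t)) \<partial>\<^sub>x + (k u + c) \<partial>\<^sub>u\<close>, subject to two classifying
  equations that are linear in \<open>(\<tau>, \<beta>, k, c)\<close>; the hypothesis \<open>A1\<^sub>x\<^sub>x \<noteq> 0\<close> is what makes
  \<open>\<eta>\<^sub>u\<close> constant. For \<open>k = c = 0\<close>, the first classifying equation and its \<open>x\<close>-derivative form
  a linear ODE system for \<open>(\<tau>, \<tau>', \<beta>)\<close>, so such a symmetry vanishing to first order at one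
  point vanishes on the whole square, and then, by connectedness, on all of \<open>D\<close>.

  Suppose three symmetries were linearly independent. At each point \<open>(t, x0)\<close> some nontrivial
  combination has \<open>\<tau> = \<xi> = 0\<close>; then \<open>A2 \<noteq> 0\<close> and \<open>A1\<^sub>x\<^sub>x \<noteq> 0\<close> force \<open>\<tau>' = k = \<beta> = 0\<close>
  there, independence forces \<open>c \<noteq> 0\<close>, and this in turn forces \<open>A1\<^sub>x\<^sub>x\<^sub>x(t, x0) = 0\<close>.
  Along the line \<open>x = x0\<close> the classifying equations then reduce to a linear ODE for \<open>\<tau>\<close>,
  which gives \<open>\<tau> = \<beta> = 0\<close> and finally \<open>c = 0\<close>, a contradiction.\<close>

section \<open>Partial derivatives along coordinate lines\<close>

lemma smooth_on_differentiable: "smooth_on S f \<Longrightarrow> p \<in> S \<Longrightarrow> f differentiable (at p)"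
  by (erule smooth_on.cases) auto

lemma smooth_on_pder: "smooth_on S f \<Longrightarrow> v \<in> Basis \<Longrightarrow> smooth_on S (pder f v)"
  by (erule smooth_on.cases) auto

lemma
  assumes "smooth_on S f"
  shows smooth_on_d_t: "smooth_on S (d_t f)"
    and smooth_on_d_x: "smooth_on S (d_x f)"
    and smooth_on_d_u: "smooth_on S (d_u f)"
  using smooth_on_pder[OF assms] by (auto simp: Basis_prod_def zero_prod_def)

lemma
  assumes "smooth_on S f"
  shows smooth_on_d_t2: "smooth_on S (d_t2 f)"
    and smooth_on_d_x2: "smooth_on S (d_x2 f)"
  using smooth_on_pder[OF assms] by (auto simp: Basis_prod_def)

lemma pder_has_real_derivative_line:
  assumes "f differentiable (at (a + s *\<^sub>R v))"
  shows "((\<lambda>r. f (a + r *\<^sub>R v)) has_real_derivative pder f v (a + s *\<^sub>R v)) (at s)"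
proof -
  let ?F = "frechet_derivative f (at (a + s *\<^sub>R v))"
  have F: "(f has_derivative ?F) (at (a + s *\<^sub>R v))"
    using assms frechet_derivative_works by blast
  have "((\<lambda>r. a + r *\<^sub>R v) has_derivative (\<lambda>h. h *\<^sub>R v)) (at s)"
    by (auto intro!: derivative_eq_intros)
  from has_derivative_compose[OF this F]
  have "((\<lambda>r. f (a + r *\<^sub>R v)) has_derivative (\<lambda>h. ?F (h *\<^sub>R v))) (at s)" .
  moreover have "(\<lambda>h. ?F (h *\<^sub>R v)) = (*) (?F v)"
    using has_derivative_linear[OF F] by (auto simp: linear_scale)
  ultimately show ?thesis
    by (simp add: has_field_derivative_def pder_def)
qed

lemma has_real_derivative_d_t:
  "f differentiable (at (t,x,u)) \<Longrightarrow> d = d_t f (t,x,u) \<Longrightarrow>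
    ((\<lambda>s. f (s,x,u)) has_real_derivative d) (at t)"
  using pder_has_real_derivative_line[of f "(0,x,u)" t "(1,0,0)"] by simp

lemma has_real_derivative_d_x:
  "f differentiable (at (t,x,u)) \<Longrightarrow> d = d_x f (t,x,u) \<Longrightarrow>
    ((\<lambda>s. f (t,s,u)) has_real_derivative d) (at x)"
  using pder_has_real_derivative_line[of f "(t,0,u)" x "(0,1,0)"] by simp

lemma has_real_derivative_d_u:
  "f differentiable (at (t,x,u)) \<Longrightarrow> d = d_u f (t,x,u) \<Longrightarrow>
    ((\<lambda>s. f (t,x,s)) has_real_derivative d) (at u)"
  using pder_has_real_derivative_line[of f "(t,x,0)" u "(0,0,1)"] by simp

lemma has_real_derivative_d_t2:
  "f differentiable (at (t,x)) \<Longrightarrow> d = d_t2 f (t,x) \<Longrightarrow>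
    ((\<lambda>s. f (s,x)) has_real_derivative d) (at t)"
  using pder_has_real_derivative_line[of f "(0,x)" t "(1,0)"] by simp

lemma has_real_derivative_d_x2:
  "f differentiable (at (t,x)) \<Longrightarrow> d = d_x2 f (t,x) \<Longrightarrow>
    ((\<lambda>s. f (t,s)) has_real_derivative d) (at x)"
  using pder_has_real_derivative_line[of f "(t,0)" x "(0,1)"] by simp

lemma pder_eq_0_on_open:
  assumes "open S" "p \<in> S" "\<forall>q\<in>S. g q = 0"
  shows "pder g v p = 0"
proof -
  have "(g has_derivative (\<lambda>h. 0)) (at p)"
    by (rule has_derivative_transform_within_open[of "\<lambda>_. 0" _ _ _ S]) (use assms in auto)
  then show ?thesis
    unfolding pder_def by (metis frechet_derivative_at)
qed

lemma DERIV_unique_on_open: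
  fixes f g :: "real \<Rightarrow> real"
  assumes "(f has_real_derivative a) (at t)" "(g has_real_derivative b) (at t)"
    and "open S" "t \<in> S" "\<And>s. s \<in> S \<Longrightarrow> f s = g s"
  shows "a = b"
proof -
  have "(g has_real_derivative a) (at t)"
    by (rule has_field_derivative_transform_within_open[OF assms(1,3,4)]) (use assms(5) in auto)
  with assms(2) show ?thesis
    using DERIV_unique by blast
qed

lemma DERIV_zero_eq_on_interval:
  fixes f :: "real \<Rightarrow> real"
  assumes "\<And>s. s \<in> {a<..<b} \<Longrightarrow> (f has_real_derivative 0) (at s)" "x \<in> {a<..<b}" "y \<in> {a<..<b}"
  shows "f x = f y"
  using DERIV_isconst3[of a b x y f] assms by auto

lemma open_slice_snd:
  assumes "open (D :: (real \<times> real) set)"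
  shows "open {s. (t,s) \<in> D}"
proof -
  have "open ((\<lambda>s. (t,s)) -` D)"
    by (rule continuous_open_vimage[OF assms]) (intro continuous_intros)
  then show ?thesis
    by (simp add: vimage_def)
qed

lemma open_slice_fst:
  assumes "open (D :: (real \<times> real) set)"
  shows "open {s. (s,x) \<in> D}"
proof -
  have "open ((\<lambda>s. (s,x)) -` D)"
    by (rule continuous_open_vimage[OF assms]) (intro continuous_intros)
  then show ?thesis
    by (simp add: vimage_def)
qed

lemma mem_Omega [simp]: "(t,x,u) \<in> Omega D \<longleftrightarrow> (t,x) \<in> D"
  by (simp add: Omega_def)

lemma open_Omega: "open D \<Longrightarrow> open (Omega D)"
proof -
  assume "open D"
  have "Omega D = (\<lambda>p. (fst p, fst (snd p))) -` D"
    by (auto simp: Omega_def)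
  then show ?thesis
    using \<open>open D\<close> by (simp add: open_vimage continuous_on_fst continuous_on_snd continuous_on_Pair)
qed

lemma smooth_on_Omega_differentiable:
  "smooth_on (Omega D) f \<Longrightarrow> (t,x) \<in> D \<Longrightarrow> f differentiable (at (t,x,u))"
  using smooth_on_differentiable by fastforce

lemma indep_u_of_d_u_eq_0:
  assumes "smooth_on (Omega D) f" "(t,x) \<in> D" "\<And>u. d_u f (t,x,u) = 0"
  shows "f (t,x,u) = f (t,x,0)"
proof -
  have "((\<lambda>s. f (t,x,s)) has_real_derivative 0) (at s)" for s
    by (rule has_real_derivative_d_u[OF smooth_on_differentiable[OF assms(1)]]) (use assms(2,3) in simp_all)
  then show ?thesis
    using DERIV_isconst_all by blast
qed

lemma partials_indep_u:
  assumes "open D" "smooth_on (Omega D) f" "(t,x) \<in> D"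
    and indep: "\<And>t x u. (t,x) \<in> D \<Longrightarrow> f (t,x,u) = f (t,x,0)"
  shows "d_t f (t,x,u) = d_t f (t,x,0)" "d_x f (t,x,u) = d_x f (t,x,0)" "d_u f (t,x,u) = 0"
proof -
  have diff: "\<And>u. f differentiable (at (t,x,u))"
    using smooth_on_differentiable[OF assms(2)] assms(3) by simp
  show "d_t f (t,x,u) = d_t f (t,x,0)"
    by (rule DERIV_unique_on_open[OF has_real_derivative_d_t[OF diff refl]
          has_real_derivative_d_t[OF diff refl] open_slice_fst[OF assms(1)]])
      (use assms(3) in \<open>auto intro: indep\<close>)
  show "d_x f (t,x,u) = d_x f (t,x,0)"
    by (rule DERIV_unique_on_open[OF has_real_derivative_d_x[OF diff refl]
          has_real_derivative_d_x[OF diff refl] open_slice_snd[OF assms(1)]])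
      (use assms(3) in \<open>auto intro: indep\<close>)
  show "d_u f (t,x,u) = 0"
    by (rule DERIV_unique_on_open[OF has_real_derivative_d_u[OF diff refl] DERIV_const open_UNIV])
      (use assms(3) in \<open>auto intro: indep\<close>)
qed

section \<open>Linear ODEs, linear algebra and connectedness\<close>

lemma nonneg_linear_growth_zero:
  fixes f f' :: "real \<Rightarrow> real"
  assumes deriv: "\<And>r. r \<in> {p..q} \<Longrightarrow> (f has_real_derivative f' r) (at r)"
    and bound: "\<And>r. r \<in> {p..q} \<Longrightarrow> \<bar>f' r\<bar> \<le> K * f r"
    and nonneg: "\<And>r. r \<in> {p..q} \<Longrightarrow> 0 \<le> f r"
    and s: "s \<in> {p..q}" "f s = 0" and r: "r \<in> {p..q}"
  shows "f r = 0"
proof (cases "s \<le> r")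
  case True
  let ?g = "\<lambda>y. f y * exp (- K * (y - s))"
  have "?g r \<le> ?g s"
  proof (rule DERIV_nonpos_imp_nonincreasing[OF True])
    fix y assume "s \<le> y" "y \<le> r"
    then have y: "y \<in> {p..q}" using r s by auto
    have "(?g has_real_derivative (f' y - K * f y) * exp (- K * (y - s))) (at y)"
      by (rule derivative_eq_intros deriv[OF y] refl | simp add: algebra_simps)+
    moreover have "(f' y - K * f y) * exp (- K * (y - s)) \<le> 0"
      using bound[OF y] by (simp add: mult_nonpos_nonneg)
    ultimately show "\<exists>d. (?g has_real_derivative d) (at y) \<and> d \<le> 0" by blast
  qed
  then show ?thesis
    using s nonneg[OF r] by (simp add: mult_le_0_iff)
next
  case False
  let ?g = "\<lambda>y. f y * exp (K * (y - s))"
  have "?g r \<le> ?g s"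
  proof (rule DERIV_nonneg_imp_nondecreasing[of r s])
    show "r \<le> s" using False by simp
    fix y assume "r \<le> y" "y \<le> s"
    then have y: "y \<in> {p..q}" using r s by auto
    have "(?g has_real_derivative (f' y + K * f y) * exp (K * (y - s))) (at y)"
      by (rule derivative_eq_intros deriv[OF y] refl | simp add: algebra_simps)+
    moreover have "(f' y + K * f y) * exp (K * (y - s)) \<ge> 0"
      using bound[OF y] by simp
    ultimately show "\<exists>d. (?g has_real_derivative d) (at y) \<and> d \<ge> 0" by blast
  qed
  then show ?thesis
    using s nonneg[OF r] by (simp add: mult_le_0_iff)
qed

lemma linear_growth_ode_zero:
  fixes y y' :: "real \<Rightarrow> 'a::real_inner"
  assumes deriv: "\<And>r. r \<in> {a<..<b} \<Longrightarrow> (y has_vector_derivative y' r) (at r)"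
    and cont: "continuous_on {a<..<b} L"
    and bound: "\<And>r. r \<in> {a<..<b} \<Longrightarrow> norm (y' r) \<le> L r * norm (y r)"
    and s: "s \<in> {a<..<b}" "y s = 0" and t: "t \<in> {a<..<b}"
  shows "y t = 0"
proof -
  define p q where "p = min s t" and "q = max s t"
  have sub: "{p..q} \<subseteq> {a<..<b}"
    using s t by (auto simp: p_def q_def)
  obtain r0 where "\<forall>r\<in>{p..q}. L r \<le> L r0"
    using continuous_attains_sup[OF compact_Icc _ continuous_on_subset[OF cont sub]]
    by (fastforce simp: p_def q_def)
  then obtain K where K: "\<And>r. r \<in> {p..q} \<Longrightarrow> L r \<le> K" by blast
  have "y t \<bullet> y t = 0"
  proof (rule nonneg_linear_growth_zero[where f = "\<lambda>r. y r \<bullet> y r" and f' = "\<lambda>r. 2 * (y r \<bullet> y' r)" and K = "2 * K"])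
    fix r assume r: "r \<in> {p..q}"
    then have "(y has_derivative (\<lambda>h. h *\<^sub>R y' r)) (at r)"
      using deriv sub by (auto simp: has_vector_derivative_def)
    from has_derivative_inner[OF this this]
    show "((\<lambda>r. y r \<bullet> y r) has_real_derivative 2 * (y r \<bullet> y' r)) (at r)"
      unfolding has_field_derivative_def
      by (rule has_derivative_eq_rhs) (auto simp: fun_eq_iff inner_commute algebra_simps)
    have "\<bar>y r \<bullet> y' r\<bar> \<le> norm (y r) * norm (y' r)"
      by (rule Cauchy_Schwarz_ineq2)
    also have "\<dots> \<le> norm (y r) * (L r * norm (y r))"
      using bound[of r] r sub by (intro mult_left_mono) auto
    also have "\<dots> = L r * (y r \<bullet> y r)"
      by (simp add: power2_norm_eq_inner[symmetric] power2_eq_square)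
    also have "\<dots> \<le> K * (y r \<bullet> y r)"
      using K[OF r] by (simp add: mult_right_mono)
    finally show "\<bar>2 * (y r \<bullet> y' r)\<bar> \<le> 2 * K * (y r \<bullet> y r)" by simp
  qed (use s t in \<open>auto simp: p_def q_def\<close>)
  then show ?thesis by simp
qed

lemma norm_triple_le: "norm (x :: real, y :: real, z :: real) \<le> \<bar>x\<bar> + \<bar>y\<bar> + \<bar>z\<bar>"
  using norm_Pair_le[of x "(y,z)"] norm_Pair_le[of y z] by simp

lemma abs_le_norm_triple:
  fixes x y z :: real
  shows "\<bar>x\<bar> \<le> norm (x, y, z)" "\<bar>y\<bar> \<le> norm (x, y, z)" "\<bar>z\<bar> \<le> norm (x, y, z)"
proof -
  have yz: "norm (y, z) \<le> norm (x, y, z)"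
    by (rule norm_snd_le)
  show "\<bar>x\<bar> \<le> norm (x, y, z)" "\<bar>y\<bar> \<le> norm (x, y, z)" "\<bar>z\<bar> \<le> norm (x, y, z)"
    using norm_fst_le[of x "(y,z)"] order_trans[OF norm_fst_le[of y z] yz]
      order_trans[OF norm_snd_le[of z y] yz]
    by simp_all
qed

lemma abs_lincomb3_le:
  fixes a b c x y z :: real
  shows "\<bar>a * x + b * y + c * z\<bar> \<le> (\<bar>a\<bar> + \<bar>b\<bar> + \<bar>c\<bar>) * (\<bar>x\<bar> + \<bar>y\<bar> + \<bar>z\<bar>)"
proof -
  have "\<bar>a * x + b * y + c * z\<bar> \<le> \<bar>a\<bar> * \<bar>x\<bar> + \<bar>b\<bar> * \<bar>y\<bar> + \<bar>c\<bar> * \<bar>z\<bar>"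
    unfolding abs_mult[symmetric] by linarith
  also have "\<dots> \<le> \<bar>a\<bar> * (\<bar>x\<bar> + \<bar>y\<bar> + \<bar>z\<bar>) + \<bar>b\<bar> * (\<bar>x\<bar> + \<bar>y\<bar> + \<bar>z\<bar>) + \<bar>c\<bar> * (\<bar>x\<bar> + \<bar>y\<bar> + \<bar>z\<bar>)"
    by (intro add_mono mult_left_mono) auto
  finally show ?thesis
    by (simp add: distrib_right)
qed

lemma linear_growth_ode3_zero:
  fixes u v w u' v' w' L :: "real \<Rightarrow> real"
  assumes deriv: "\<And>r. r \<in> {a<..<b} \<Longrightarrow> (u has_real_derivative u' r) (at r) \<and>
      (v has_real_derivative v' r) (at r) \<and> (w has_real_derivative w' r) (at r)"
    and cont: "continuous_on {a<..<b} L"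
    and bound: "\<And>r. r \<in> {a<..<b} \<Longrightarrow>
      \<bar>u' r\<bar> + \<bar>v' r\<bar> + \<bar>w' r\<bar> \<le> L r * (\<bar>u r\<bar> + \<bar>v r\<bar> + \<bar>w r\<bar>)"
    and s: "s \<in> {a<..<b}" "u s = 0" "v s = 0" "w s = 0" and t: "t \<in> {a<..<b}"
  shows "u t = 0 \<and> v t = 0 \<and> w t = 0"
proof -
  have "(u t, v t, w t) = 0"
  proof (rule linear_growth_ode_zero[where y = "\<lambda>r. (u r, v r, w r)"
        and y' = "\<lambda>r. (u' r, v' r, w' r)" and L = "\<lambda>r. 3 * \<bar>L r\<bar>"])
    fix r assume r: "r \<in> {a<..<b}"
    show "((\<lambda>r. (u r, v r, w r)) has_vector_derivative (u' r, v' r, w' r)) (at r)"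
      using deriv[OF r]
      by (intro has_vector_derivative_Pair) (simp_all add: has_real_derivative_iff_has_vector_derivative)
    let ?S = "\<bar>u r\<bar> + \<bar>v r\<bar> + \<bar>w r\<bar>"
    have "norm (u' r, v' r, w' r) \<le> L r * ?S"
      using norm_triple_le[of "u' r" "v' r" "w' r"] bound[OF r] by linarith
    also have "\<dots> \<le> \<bar>L r\<bar> * ?S"
      by (intro mult_right_mono) auto
    also have "\<dots> \<le> \<bar>L r\<bar> * (3 * norm (u r, v r, w r))"
      using abs_le_norm_triple[where x = "u r" and y = "v r" and z = "w r"] by (intro mult_left_mono) auto
    finally show "norm (u' r, v' r, w' r) \<le> 3 * \<bar>L r\<bar> * norm (u r, v r, w r)"
      by simp
  next
    show "continuous_on {a<..<b} (\<lambda>r. 3 * \<bar>L r\<bar>)"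
      using cont by (intro continuous_intros)
    show "(u s, v s, w s) = 0"
      using s by (simp add: zero_prod_def)
  qed (use s t in auto)
  then show ?thesis
    by (simp only: zero_prod_def prod.inject)
qed

lemma two_linear_equations_nontrivial_solution:
  fixes a1 a2 a3 b1 b2 b3 :: real
  shows "\<exists>c1 c2 c3. (c1, c2, c3) \<noteq> (0, 0, 0) \<and>
    c1 * a1 + c2 * a2 + c3 * a3 = 0 \<and> c1 * b1 + c2 * b2 + c3 * b3 = 0"
proof (cases "(a2 * b3 - a3 * b2, a3 * b1 - a1 * b3, a1 * b2 - a2 * b1) = (0, 0, 0)")
  case True
  consider "a1 \<noteq> 0 \<or> a2 \<noteq> 0" | "a1 = 0" "a2 = 0" "b1 \<noteq> 0 \<or> b2 \<noteq> 0"
    | "a1 = 0" "a2 = 0" "b1 = 0" "b2 = 0"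
    by blast
  then show ?thesis
  proof cases
    case 1
    then show ?thesis
      using True by (intro exI[of _ a2] exI[of _ "- a1"] exI[of _ 0]) (auto simp: algebra_simps)
  next
    case 2
    then show ?thesis
      by (intro exI[of _ b2] exI[of _ "- b1"] exI[of _ 0]) (auto simp: algebra_simps)
  next
    case 3
    then show ?thesis
      by (intro exI[of _ 1] exI[of _ 0]) auto
  qed
next
  case False
  then show ?thesis
    by (intro exI[of _ "a2 * b3 - a3 * b2"] exI[of _ "a3 * b1 - a1 * b3"] exI[of _ "a1 * b2 - a2 * b1"])
      (simp add: algebra_simps)
qed

lemma connected_subset_propagation:
  fixes D S :: "'a::topological_space set"
  assumes "connected D"
    and local: "\<And>q. q \<in> D \<Longrightarrow> \<exists>B. open B \<and> q \<in> B \<and> (B \<inter> interior S \<noteq> {} \<longrightarrow> B \<subseteq> S)"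
    and "D \<inter> interior S \<noteq> {}"
  shows "D \<subseteq> S"
proof -
  define R where "R = \<Union>{B. open B \<and> B \<inter> interior S = {}}"
  have "D \<subseteq> interior S \<union> R"
  proof
    fix q assume "q \<in> D"
    then obtain B where B: "open B" "q \<in> B" "B \<inter> interior S \<noteq> {} \<longrightarrow> B \<subseteq> S"
      using local by blast
    show "q \<in> interior S \<union> R"
    proof (cases "B \<inter> interior S = {}")
      case True
      then show ?thesis using B by (auto simp: R_def)
    next
      case False
      then have "B \<subseteq> interior S" using B by (simp add: interior_maximal)
      then show ?thesis using B by blast
    qed
  qed
  moreover have "interior S \<inter> R \<inter> D = {}" "open R"
    by (auto simp: R_def)
  ultimately have "R \<inter> D = {}"
    using connectedD[OF \<open>connected D\<close> open_interior \<open>open R\<close>] assms(3) by blast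
  then show ?thesis
    using \<open>D \<subseteq> interior S \<union> R\<close> interior_subset by blast
qed

lemma open_contains_square:
  fixes D :: "(real \<times> real) set"
  assumes "open D" "(t0,x0) \<in> D"
  shows "\<exists>\<delta>>0. {t0-\<delta><..<t0+\<delta>} \<times> {x0-\<delta><..<x0+\<delta>} \<subseteq> D"
proof -
  obtain e where e: "e > 0" "ball (t0,x0) e \<subseteq> D"
    using assms open_contains_ball by blast
  have "(t,x) \<in> ball (t0,x0) e" if "t \<in> {t0-e/2<..<t0+e/2}" "x \<in> {x0-e/2<..<x0+e/2}" for t x
  proof -
    have "dist (t0,x0) (t,x) \<le> dist (t0,x0) (t0,x) + dist (t0,x) (t,x)"
      by (rule dist_triangle)
    also have "\<dots> < e"
      using that by (simp add: dist_Pair_Pair dist_real_def; linarith)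
    finally show ?thesis by simp
  qed
  then show ?thesis
    using e by (intro exI[of _ "e/2"]) auto
qed

section \<open>The determining equations\<close>

definition "tau_of V = (\<lambda>p. fst (V p))"
definition "xi_of V = (\<lambda>p. fst (snd (V p)))"
definition "eta_of V = (\<lambda>p. snd (snd (V p)))"

lemma prolonged_action_expand:
  "prolonged_action A1 A2 V t x u ut ux utx uxx =
   (let P = (t,x,u); \<tau> = tau_of V; \<xi> = xi_of V; \<eta> = eta_of V in
       \<tau> P * (- d_t2 A2 (t,x) * uxx - d_t2 A1 (t,x) * ux)
     + \<xi> P * (- d_x2 A2 (t,x) * uxx - d_x2 A1 (t,x) * ux)
     + \<eta> P * ux
     + ((d_t \<eta> P + ut * d_u \<eta> P) - ut * (d_t \<tau> P + ut * d_u \<tau> P) - ux * (d_t \<xi> P + ut * d_u \<xi> P))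
     + (u - A1 (t,x)) * ((d_x \<eta> P + ux * d_u \<eta> P) - ut * (d_x \<tau> P + ux * d_u \<tau> P)
         - ux * (d_x \<xi> P + ux * d_u \<xi> P))
     - A2 (t,x) * (
         (d_x (d_x \<eta>) P + 2 * ux * d_u (d_x \<eta>) P + ux^2 * d_u (d_u \<eta>) P + uxx * d_u \<eta> P)
       - ut * (d_x (d_x \<tau>) P + 2 * ux * d_u (d_x \<tau>) P + ux^2 * d_u (d_u \<tau>) P + uxx * d_u \<tau> P)
       - ux * (d_x (d_x \<xi>) P + 2 * ux * d_u (d_x \<xi>) P + ux^2 * d_u (d_u \<xi>) P + uxx * d_u \<xi> P)
       - 2 * utx * (d_x \<tau> P + ux * d_u \<tau> P) - 2 * uxx * (d_x \<xi> P + ux * d_u \<xi> P)))"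
  unfolding prolonged_action_def Let_def eta_t_def eta_x_def eta_xx_def Dt1_def Dx1_def Dxx_def
    tau_of_def xi_of_def eta_of_def
  by simp

locale symmetry_field =
  fixes D :: "(real \<times> real) set" and A1 A2 :: "real \<times> real \<Rightarrow> real"
    and V :: "real \<times> real \<times> real \<Rightarrow> real \<times> real \<times> real"
  assumes open_D: "open D" and A2_nonzero: "\<forall>p\<in>D. A2 p \<noteq> 0"
    and symmetry: "lie_symmetry D A1 A2 V"
begin

abbreviation "\<tau> \<equiv> tau_of V"
abbreviation "\<xi> \<equiv> xi_of V"
abbreviation "\<eta> \<equiv> eta_of V"

lemma smooth_tau: "smooth_on (Omega D) \<tau>"
  and smooth_xi: "smooth_on (Omega D) \<xi>"
  and smooth_eta: "smooth_on (Omega D) \<eta>"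
  using symmetry unfolding lie_symmetry_def tau_of_def xi_of_def eta_of_def by auto

text \<open>On solutions, \<open>u\<^sub>t\<close> is eliminated through the equation; what remains of the
  invariance condition is a polynomial in the free jet variables \<open>u\<^sub>x, u\<^sub>t\<^sub>x, u\<^sub>x\<^sub>x\<close>,
  whose coefficients are isolated below by finite differences in these variables.\<close>

definition residual :: "real \<Rightarrow> real \<Rightarrow> real \<Rightarrow> real \<Rightarrow> real \<Rightarrow> real \<Rightarrow> real" where
  "residual t x u ux utx uxx =
    prolonged_action A1 A2 V t x u (A2 (t,x) * uxx + A1 (t,x) * ux - u * ux) ux utx uxx"

lemma residual_eq_0: "(t,x) \<in> D \<Longrightarrow> residual t x u ux utx uxx = 0"
  using symmetry unfolding lie_symmetry_def residual_def by (auto simp: algebra_simps)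

lemma
  assumes "(t,x) \<in> D"
  shows d_x_tau_eq_0: "d_x \<tau> (t,x,u) = 0" and d_u_tau_eq_0: "d_u \<tau> (t,x,u) = 0"
proof -
  have diff: "residual t x u ux 1 0 - residual t x u ux 0 0
      = 2 * A2 (t,x) * (d_x \<tau> (t,x,u) + ux * d_u \<tau> (t,x,u))" for ux
    by (simp add: residual_def prolonged_action_expand Let_def algebra_simps)
  have "A2 (t,x) \<noteq> 0"
    using assms A2_nonzero by auto
  then show "d_x \<tau> (t,x,u) = 0" and "d_u \<tau> (t,x,u) = 0"
    using diff[of 0] diff[of 1] residual_eq_0[OF assms] by simp_all
qed

lemma second_derivatives_tau:
  assumes "(t,x) \<in> D"
  shows "d_x (d_x \<tau>) (t,x,u) = 0" "d_u (d_x \<tau>) (t,x,u) = 0" "d_u (d_u \<tau>) (t,x,u) = 0"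
proof -
  have "\<forall>q\<in>Omega D. d_x \<tau> q = 0" "\<forall>q\<in>Omega D. d_u \<tau> q = 0"
    using d_x_tau_eq_0 d_u_tau_eq_0 by (auto simp: Omega_def)
  then show "d_x (d_x \<tau>) (t,x,u) = 0" "d_u (d_x \<tau>) (t,x,u) = 0" "d_u (d_u \<tau>) (t,x,u) = 0"
    using pder_eq_0_on_open[OF open_Omega[OF open_D]] assms by simp_all
qed

lemma d_u_xi_eq_0:
  assumes "(t,x) \<in> D"
  shows "d_u \<xi> (t,x,u) = 0"
proof -
  have "residual t x u 1 0 1 - residual t x u 1 0 0 - residual t x u 0 0 1 + residual t x u 0 0 0
      = 2 * A2 (t,x) * d_u \<xi> (t,x,u)"
    using d_x_tau_eq_0[OF assms] d_u_tau_eq_0[OF assms] second_derivatives_tau[OF assms]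
    by (simp add: residual_def prolonged_action_expand Let_def algebra_simps power2_eq_square)
  then show ?thesis
    using residual_eq_0[OF assms] A2_nonzero assms by simp
qed

lemma xi_indep_u: "(t,x) \<in> D \<Longrightarrow> \<xi> (t,x,u) = \<xi> (t,x,0)"
  using indep_u_of_d_u_eq_0[OF smooth_xi] d_u_xi_eq_0 by blast

lemma tau_indep_u: "(t,x) \<in> D \<Longrightarrow> \<tau> (t,x,u) = \<tau> (t,x,0)"
  using indep_u_of_d_u_eq_0[OF smooth_tau] d_u_tau_eq_0 by blast

lemma d_t_tau_indep_u: "(t,x) \<in> D \<Longrightarrow> d_t \<tau> (t,x,u) = d_t \<tau> (t,x,0)"
  using partials_indep_u(1)[OF open_D smooth_tau _ tau_indep_u] by blast

lemma d_t_xi_indep_u: "(t,x) \<in> D \<Longrightarrow> d_t \<xi> (t,x,u) = d_t \<xi> (t,x,0)"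
  using partials_indep_u(1)[OF open_D smooth_xi _ xi_indep_u] by blast

lemma d_x_xi_indep_u: "(t,x) \<in> D \<Longrightarrow> d_x \<xi> (t,x,u) = d_x \<xi> (t,x,0)"
  using partials_indep_u(2)[OF open_D smooth_xi _ xi_indep_u] by blast

lemma d_xx_xi_indep_u: "(t,x) \<in> D \<Longrightarrow> d_x (d_x \<xi>) (t,x,u) = d_x (d_x \<xi>) (t,x,0)"
  using partials_indep_u(2)[OF open_D smooth_on_d_x[OF smooth_xi] _ d_x_xi_indep_u] by blast

lemma second_derivatives_xi:
  assumes "(t,x) \<in> D"
  shows "d_u (d_u \<xi>) (t,x,u) = 0" "d_u (d_x \<xi>) (t,x,u) = 0"
proof -
  have "\<forall>q\<in>Omega D. d_u \<xi> q = 0"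
    using d_u_xi_eq_0 by (auto simp: Omega_def)
  then show "d_u (d_u \<xi>) (t,x,u) = 0"
    using pder_eq_0_on_open[OF open_Omega[OF open_D]] assms by simp
  show "d_u (d_x \<xi>) (t,x,u) = 0"
    using partials_indep_u(3)[OF open_D smooth_on_d_x[OF smooth_xi] assms d_x_xi_indep_u] .
qed

lemma d_uu_eta_eq_0:
  assumes "(t,x) \<in> D"
  shows "d_u (d_u \<eta>) (t,x,u) = 0"
proof -
  have "residual t x u 1 0 0 + residual t x u (-1) 0 0 - 2 * residual t x u 0 0 0
      = - 2 * A2 (t,x) * d_u (d_u \<eta>) (t,x,u)"
    using d_x_tau_eq_0[OF assms] d_u_tau_eq_0[OF assms] second_derivatives_tau[OF assms]
      d_u_xi_eq_0[OF assms] second_derivatives_xi[OF assms]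
    by (simp add: residual_def prolonged_action_expand Let_def algebra_simps power2_eq_square)
  then show ?thesis
    using residual_eq_0[OF assms] A2_nonzero assms by simp
qed

lemmas vanishing_derivatives = d_x_tau_eq_0 d_u_tau_eq_0 second_derivatives_tau d_u_xi_eq_0
  second_derivatives_xi d_uu_eta_eq_0

lemma determining_uxx:
  assumes "(t,x) \<in> D"
  shows "- \<tau> (t,x,u) * d_t2 A2 (t,x) - \<xi> (t,x,u) * d_x2 A2 (t,x)
    - A2 (t,x) * d_t \<tau> (t,x,u) + 2 * A2 (t,x) * d_x \<xi> (t,x,u) = 0"
proof -
  have "residual t x u 0 0 1 - residual t x u 0 0 0 = - \<tau> (t,x,u) * d_t2 A2 (t,x)
      - \<xi> (t,x,u) * d_x2 A2 (t,x) - A2 (t,x) * d_t \<tau> (t,x,u) + 2 * A2 (t,x) * d_x \<xi> (t,x,u)"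
    using vanishing_derivatives[OF assms]
    by (simp add: residual_def prolonged_action_expand Let_def algebra_simps power2_eq_square)
  then show ?thesis
    using residual_eq_0[OF assms] by simp
qed

lemma determining_ux:
  assumes "(t,x) \<in> D"
  shows "- \<tau> (t,x,u) * d_t2 A1 (t,x) - \<xi> (t,x,u) * d_x2 A1 (t,x) + \<eta> (t,x,u)
    + (A1 (t,x) - u) * (d_u \<eta> (t,x,u) - d_t \<tau> (t,x,u)) - d_t \<xi> (t,x,u)
    + (u - A1 (t,x)) * (d_u \<eta> (t,x,u) - d_x \<xi> (t,x,u))
    - A2 (t,x) * (2 * d_u (d_x \<eta>) (t,x,u) - d_x (d_x \<xi>) (t,x,u)) = 0"
proof -
  have "residual t x u 1 0 0 - residual t x u (-1) 0 0 = 2 * (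
        - \<tau> (t,x,u) * d_t2 A1 (t,x) - \<xi> (t,x,u) * d_x2 A1 (t,x) + \<eta> (t,x,u)
      + (A1 (t,x) - u) * (d_u \<eta> (t,x,u) - d_t \<tau> (t,x,u)) - d_t \<xi> (t,x,u)
      + (u - A1 (t,x)) * (d_u \<eta> (t,x,u) - d_x \<xi> (t,x,u))
      - A2 (t,x) * (2 * d_u (d_x \<eta>) (t,x,u) - d_x (d_x \<xi>) (t,x,u)))"
    using vanishing_derivatives[OF assms]
    by (simp add: residual_def prolonged_action_expand Let_def algebra_simps power2_eq_square)
  then show ?thesis
    using residual_eq_0[OF assms] by simp
qed

lemma determining_free:
  assumes "(t,x) \<in> D"
  shows "d_t \<eta> (t,x,u) + (u - A1 (t,x)) * d_x \<eta> (t,x,u) - A2 (t,x) * d_x (d_x \<eta>) (t,x,u) = 0"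
proof -
  have "residual t x u 0 0 0 = d_t \<eta> (t,x,u) + (u - A1 (t,x)) * d_x \<eta> (t,x,u)
      - A2 (t,x) * d_x (d_x \<eta>) (t,x,u)"
    using vanishing_derivatives[OF assms]
    by (simp add: residual_def prolonged_action_expand Let_def algebra_simps power2_eq_square)
  then show ?thesis
    using residual_eq_0[OF assms] by simp
qed

lemma d_u_eta_indep_u: "(t,x) \<in> D \<Longrightarrow> d_u \<eta> (t,x,u) = d_u \<eta> (t,x,0)"
  using indep_u_of_d_u_eq_0[OF smooth_on_d_u[OF smooth_eta]] d_uu_eta_eq_0 by blast

lemma eta_affine_u:
  assumes "(t,x) \<in> D"
  shows "\<eta> (t,x,u) = \<eta> (t,x,0) + u * d_u \<eta> (t,x,0)"
proof -
  have "((\<lambda>s. \<eta> (t,x,s) - s * d_u \<eta> (t,x,0)) has_real_derivative 0) (at s)" for s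
  proof -
    have "((\<lambda>s. \<eta> (t,x,s) - s * d_u \<eta> (t,x,0)) has_real_derivative
        d_u \<eta> (t,x,s) - 1 * d_u \<eta> (t,x,0)) (at s)"
      by (intro derivative_eq_intros has_real_derivative_d_u smooth_on_Omega_differentiable[OF smooth_eta assms])
        auto
    then show ?thesis
      using d_u_eta_indep_u[OF assms, of s] by simp
  qed
  then show ?thesis
    using DERIV_isconst_all[of "\<lambda>s. \<eta> (t,x,s) - s * d_u \<eta> (t,x,0)" u 0] by simp
qed

lemma d_x_eta_affine_u:
  assumes "(t,x) \<in> D"
  shows "d_x \<eta> (t,x,u) = d_x \<eta> (t,x,0) + u * d_x (d_u \<eta>) (t,x,0)"
proof (rule DERIV_unique_on_open[OF _ _ open_slice_snd[OF open_D]])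
  show "((\<lambda>r. \<eta> (t,r,u)) has_real_derivative d_x \<eta> (t,x,u)) (at x)"
    by (intro has_real_derivative_d_x smooth_on_Omega_differentiable[OF smooth_eta assms] refl)
  show "((\<lambda>r. \<eta> (t,r,0) + u * d_u \<eta> (t,r,0)) has_real_derivative
      d_x \<eta> (t,x,0) + u * d_x (d_u \<eta>) (t,x,0)) (at x)"
    by (intro derivative_eq_intros has_real_derivative_d_x
        smooth_on_Omega_differentiable[OF smooth_eta assms]
        smooth_on_Omega_differentiable[OF smooth_on_d_u[OF smooth_eta] assms]) auto
qed (use assms eta_affine_u in auto)

lemma d_t_eta_affine_u:
  assumes "(t,x) \<in> D"
  shows "d_t \<eta> (t,x,u) = d_t \<eta> (t,x,0) + u * d_t (d_u \<eta>) (t,x,0)"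
proof (rule DERIV_unique_on_open[OF _ _ open_slice_fst[OF open_D]])
  show "((\<lambda>r. \<eta> (r,x,u)) has_real_derivative d_t \<eta> (t,x,u)) (at t)"
    by (intro has_real_derivative_d_t smooth_on_Omega_differentiable[OF smooth_eta assms] refl)
  show "((\<lambda>r. \<eta> (r,x,0) + u * d_u \<eta> (r,x,0)) has_real_derivative
      d_t \<eta> (t,x,0) + u * d_t (d_u \<eta>) (t,x,0)) (at t)"
    by (intro derivative_eq_intros has_real_derivative_d_t
        smooth_on_Omega_differentiable[OF smooth_eta assms]
        smooth_on_Omega_differentiable[OF smooth_on_d_u[OF smooth_eta] assms]) auto
qed (use assms eta_affine_u in auto)

lemma d_xx_eta_affine_u:
  assumes "(t,x) \<in> D"
  shows "d_x (d_x \<eta>) (t,x,u) = d_x (d_x \<eta>) (t,x,0) + u * d_x (d_x (d_u \<eta>)) (t,x,0)"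
proof (rule DERIV_unique_on_open[OF _ _ open_slice_snd[OF open_D]])
  show "((\<lambda>r. d_x \<eta> (t,r,u)) has_real_derivative d_x (d_x \<eta>) (t,x,u)) (at x)"
    by (intro has_real_derivative_d_x refl
        smooth_on_Omega_differentiable[OF smooth_on_d_x[OF smooth_eta] assms])
  show "((\<lambda>r. d_x \<eta> (t,r,0) + u * d_x (d_u \<eta>) (t,r,0)) has_real_derivative
      d_x (d_x \<eta>) (t,x,0) + u * d_x (d_x (d_u \<eta>)) (t,x,0)) (at x)"
    by (intro derivative_eq_intros has_real_derivative_d_x
        smooth_on_Omega_differentiable[OF smooth_on_d_x[OF smooth_eta] assms]
        smooth_on_Omega_differentiable[OF smooth_on_d_x[OF smooth_on_d_u[OF smooth_eta]] assms]) auto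
qed (use assms d_x_eta_affine_u in auto)

lemma d_u_d_x_eta:
  assumes "(t,x) \<in> D"
  shows "d_u (d_x \<eta>) (t,x,u) = d_x (d_u \<eta>) (t,x,0)"
proof -
  have "((\<lambda>r. d_x \<eta> (t,x,r)) has_real_derivative d_u (d_x \<eta>) (t,x,u)) (at u)"
    by (intro has_real_derivative_d_u refl
        smooth_on_Omega_differentiable[OF smooth_on_d_x[OF smooth_eta] assms])
  moreover have "((\<lambda>r. d_x \<eta> (t,x,0) + r * d_x (d_u \<eta>) (t,x,0)) has_real_derivative
      d_x (d_u \<eta>) (t,x,0)) (at u)"
    by (rule derivative_eq_intros refl | simp)+
  ultimately show ?thesis
    using DERIV_unique_on_open[OF _ _ open_UNIV] d_x_eta_affine_u[OF assms] by blast
qed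

lemma d_u_eta_eq:
  assumes "(t,x) \<in> D"
  shows "d_u \<eta> (t,x,0) = d_x \<xi> (t,x,0) - d_t \<tau> (t,x,0)"
proof -
  have "0 = (d_u \<eta> (t,x,0) + d_t \<tau> (t,x,0) - d_x \<xi> (t,x,0))"
    using determining_ux[OF assms, of 1] determining_ux[OF assms, of 0]
    unfolding tau_indep_u[OF assms, of 1] xi_indep_u[OF assms, of 1] eta_affine_u[OF assms, of 1]
      d_u_eta_indep_u[OF assms, of 1] d_t_tau_indep_u[OF assms, of 1] d_t_xi_indep_u[OF assms, of 1]
      d_x_xi_indep_u[OF assms, of 1] d_u_d_x_eta[OF assms] d_xx_xi_indep_u[OF assms, of 1]
    by (simp add: algebra_simps)
  then show ?thesis
    by simp
qed

text \<open>Since \<open>\<eta>\<close> is affine in \<open>u\<close>, the free determining equation is quadratic in \<open>u\<close>;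
  its coefficients of \<open>u\<^sup>2\<close> and of \<open>u\<close> are read off from its values at \<open>u = 0, \<plusminus>1\<close>.\<close>

lemma d_x_d_u_eta_at_0_eq_0:
  assumes "(t,x) \<in> D"
  shows "d_x (d_u \<eta>) (t,x,0) = 0"
proof -
  have "2 * d_x (d_u \<eta>) (t,x,0) = 0"
    using determining_free[OF assms, of 1] determining_free[OF assms, of "-1"]
      determining_free[OF assms, of 0]
    unfolding d_t_eta_affine_u[OF assms, of 1] d_t_eta_affine_u[OF assms, of "-1"]
      d_x_eta_affine_u[OF assms, of 1] d_x_eta_affine_u[OF assms, of "-1"]
      d_xx_eta_affine_u[OF assms, of 1] d_xx_eta_affine_u[OF assms, of "-1"]
    by (simp add: algebra_simps)
  then show ?thesis
    by simp
qed

lemma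
  assumes "(t,x) \<in> D"
  shows d_x_d_u_eta_eq_0: "d_x (d_u \<eta>) (t,x,u) = 0"
    and d_xx_d_u_eta_eq_0: "d_x (d_x (d_u \<eta>)) (t,x,u) = 0"
proof -
  have "\<forall>q\<in>Omega D. d_x (d_u \<eta>) q = 0"
    using partials_indep_u(2)[OF open_D smooth_on_d_u[OF smooth_eta] _ d_u_eta_indep_u]
      d_x_d_u_eta_at_0_eq_0 by (auto simp: Omega_def)
  then show "d_x (d_u \<eta>) (t,x,u) = 0" "d_x (d_x (d_u \<eta>)) (t,x,u) = 0"
    using pder_eq_0_on_open[OF open_Omega[OF open_D]] assms by simp_all
qed

lemma d_t_d_u_eta_eq:
  assumes "(t,x) \<in> D"
  shows "d_t (d_u \<eta>) (t,x,0) + d_x \<eta> (t,x,0) = 0"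
proof -
  have "2 * (d_t (d_u \<eta>) (t,x,0) + d_x \<eta> (t,x,0)) = 0"
    using determining_free[OF assms, of 1] determining_free[OF assms, of "-1"]
    unfolding d_t_eta_affine_u[OF assms, of 1] d_t_eta_affine_u[OF assms, of "-1"]
      d_x_eta_affine_u[OF assms, of 1] d_x_eta_affine_u[OF assms, of "-1"]
      d_xx_eta_affine_u[OF assms, of 1] d_xx_eta_affine_u[OF assms, of "-1"]
      d_x_d_u_eta_at_0_eq_0[OF assms] d_xx_d_u_eta_eq_0[OF assms]
    by (simp add: algebra_simps)
  then show ?thesis
    by simp
qed

lemma determining_ux_at_0:
  assumes "(t,x) \<in> D"
  shows "- \<tau> (t,x,0) * d_t2 A1 (t,x) - \<xi> (t,x,0) * d_x2 A1 (t,x) + \<eta> (t,x,0)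
     + A1 (t,x) * (d_x \<xi> (t,x,0) - d_t \<tau> (t,x,0)) - d_t \<xi> (t,x,0)
     + A2 (t,x) * d_x (d_x \<xi>) (t,x,0) = 0"
  using determining_ux[OF assms, of 0]
  unfolding d_u_d_x_eta[OF assms] d_x_d_u_eta_at_0_eq_0[OF assms]
  by (simp add: algebra_simps)

end

section \<open>Symmetries in reduced form on a square\<close>

text \<open>The two equations are the coefficients of \<open>u\<^sub>x\<close> and of \<open>u\<^sub>x\<^sub>x\<close> in the invariance
  condition, evaluated on vector fields of this form.\<close>

definition reduced_symmetry where
  "reduced_symmetry A1 A2 I J W \<tau> \<tau>' \<tau>'' \<beta> \<beta>' k c \<longleftrightarrow>
    (\<forall>t\<in>I. (\<tau> has_real_derivative \<tau>' t) (at t) \<and> (\<tau>' has_real_derivative \<tau>'' t) (at t)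
       \<and> (\<beta> has_real_derivative \<beta>' t) (at t)) \<and>
    (\<forall>t\<in>I. \<forall>x\<in>J. \<forall>u. W (t,x,u) = (\<tau> t, (\<tau>' t + k) * x + \<beta> t, k * u + c)) \<and>
    (\<forall>t\<in>I. \<forall>x\<in>J.
        \<tau>'' t * x + \<beta>' t + \<tau> t * d_t2 A1 (t,x) + ((\<tau>' t + k) * x + \<beta> t) * d_x2 A1 (t,x)
          - k * A1 (t,x) - c = 0 \<and>
        (\<tau>' t + 2 * k) * A2 (t,x) - \<tau> t * d_t2 A2 (t,x) - ((\<tau>' t + k) * x + \<beta> t) * d_x2 A2 (t,x) = 0)"

lemma
  assumes "reduced_symmetry A1 A2 I J W \<tau> \<tau>' \<tau>'' \<beta> \<beta>' k c" and "t \<in> I"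
  shows reduced_symmetry_has_real_derivative:
      "(\<tau> has_real_derivative \<tau>' t) (at t)" "(\<tau>' has_real_derivative \<tau>'' t) (at t)"
      "(\<beta> has_real_derivative \<beta>' t) (at t)"
    and reduced_symmetry_field:
      "x \<in> J \<Longrightarrow> W (t,x,u) = (\<tau> t, (\<tau>' t + k) * x + \<beta> t, k * u + c)"
    and reduced_symmetry_eq_A1: "x \<in> J \<Longrightarrow>
      \<tau>'' t * x + \<beta>' t + \<tau> t * d_t2 A1 (t,x) + ((\<tau>' t + k) * x + \<beta> t) * d_x2 A1 (t,x)
        - k * A1 (t,x) - c = 0"
    and reduced_symmetry_eq_A2: "x \<in> J \<Longrightarrow>
      (\<tau>' t + 2 * k) * A2 (t,x) - \<tau> t * d_t2 A2 (t,x) - ((\<tau>' t + k) * x + \<beta> t) * d_x2 A2 (t,x) = 0"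
  using assms unfolding reduced_symmetry_def by auto

lemma reduced_symmetry_add:
  assumes rs1: "reduced_symmetry A1 A2 I J W1 \<tau>1 \<tau>1' \<tau>1'' \<beta>1 \<beta>1' k1 c1"
    and rs2: "reduced_symmetry A1 A2 I J W2 \<tau>2 \<tau>2' \<tau>2'' \<beta>2 \<beta>2' k2 c2"
  shows "reduced_symmetry A1 A2 I J (\<lambda>p. a *\<^sub>R W1 p + b *\<^sub>R W2 p)
    (\<lambda>t. a * \<tau>1 t + b * \<tau>2 t) (\<lambda>t. a * \<tau>1' t + b * \<tau>2' t) (\<lambda>t. a * \<tau>1'' t + b * \<tau>2'' t)
    (\<lambda>t. a * \<beta>1 t + b * \<beta>2 t) (\<lambda>t. a * \<beta>1' t + b * \<beta>2' t) (a * k1 + b * k2) (a * c1 + b * c2)"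
  unfolding reduced_symmetry_def
proof (intro conjI ballI allI)
  fix t assume t: "t \<in> I"
  note derivs = reduced_symmetry_has_real_derivative[OF rs1 t] reduced_symmetry_has_real_derivative[OF rs2 t]
  show "((\<lambda>t. a * \<tau>1 t + b * \<tau>2 t) has_real_derivative a * \<tau>1' t + b * \<tau>2' t) (at t)"
    "((\<lambda>t. a * \<tau>1' t + b * \<tau>2' t) has_real_derivative a * \<tau>1'' t + b * \<tau>2'' t) (at t)"
    "((\<lambda>t. a * \<beta>1 t + b * \<beta>2 t) has_real_derivative a * \<beta>1' t + b * \<beta>2' t) (at t)"
    by (auto intro!: derivative_eq_intros derivs)
  fix x assume x: "x \<in> J"
  show "a *\<^sub>R W1 (t,x,u) + b *\<^sub>R W2 (t,x,u) = (a * \<tau>1 t + b * \<tau>2 t,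
      (a * \<tau>1' t + b * \<tau>2' t + (a * k1 + b * k2)) * x + (a * \<beta>1 t + b * \<beta>2 t),
      (a * k1 + b * k2) * u + (a * c1 + b * c2))" for u
    using reduced_symmetry_field[OF rs1 t x, of u] reduced_symmetry_field[OF rs2 t x, of u]
    by (simp add: algebra_simps)
  show "(a * \<tau>1'' t + b * \<tau>2'' t) * x + (a * \<beta>1' t + b * \<beta>2' t) + (a * \<tau>1 t + b * \<tau>2 t) * d_t2 A1 (t,x)
      + ((a * \<tau>1' t + b * \<tau>2' t + (a * k1 + b * k2)) * x + (a * \<beta>1 t + b * \<beta>2 t)) * d_x2 A1 (t,x)
      - (a * k1 + b * k2) * A1 (t,x) - (a * c1 + b * c2) = 0"
    using reduced_symmetry_eq_A1[OF rs1 t x] reduced_symmetry_eq_A1[OF rs2 t x] by algebra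
  show "(a * \<tau>1' t + b * \<tau>2' t + 2 * (a * k1 + b * k2)) * A2 (t,x) - (a * \<tau>1 t + b * \<tau>2 t) * d_t2 A2 (t,x)
      - ((a * \<tau>1' t + b * \<tau>2' t + (a * k1 + b * k2)) * x + (a * \<beta>1 t + b * \<beta>2 t)) * d_x2 A2 (t,x) = 0"
    using reduced_symmetry_eq_A2[OF rs1 t x] reduced_symmetry_eq_A2[OF rs2 t x] by algebra
qed

lemma reduced_symmetry_lincomb:
  assumes "reduced_symmetry A1 A2 I J W1 \<tau>1 \<tau>1' \<tau>1'' \<beta>1 \<beta>1' k1 c1"
    and "reduced_symmetry A1 A2 I J W2 \<tau>2 \<tau>2' \<tau>2'' \<beta>2 \<beta>2' k2 c2"
    and "reduced_symmetry A1 A2 I J W3 \<tau>3 \<tau>3' \<tau>3'' \<beta>3 \<beta>3' k3 c3"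
  shows "\<exists>\<tau> \<tau>' \<tau>'' \<beta> \<beta>' k c.
    reduced_symmetry A1 A2 I J (\<lambda>p. a1 *\<^sub>R W1 p + a2 *\<^sub>R W2 p + a3 *\<^sub>R W3 p) \<tau> \<tau>' \<tau>'' \<beta> \<beta>' k c"
proof -
  note rs12 = reduced_symmetry_add[OF assms(1,2), of a1 a2]
  show ?thesis
    using reduced_symmetry_add[OF rs12 assms(3), of 1 a3] by (simp only: scaleR_one) blast
qed

locale square_setting =
  fixes D :: "(real \<times> real) set" and A1 :: "real \<times> real \<Rightarrow> real" and t0 x0 \<delta> :: real
  assumes \<delta>_pos: "\<delta> > 0"
    and square_subset: "{t0-\<delta><..<t0+\<delta>} \<times> {x0-\<delta><..<x0+\<delta>} \<subseteq> D"
    and smooth_A1: "smooth_on D A1" and A1_xx_nonzero: "\<forall>p\<in>D. d_x2 (d_x2 A1) p \<noteq> 0"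
begin

abbreviation "I \<equiv> {t0-\<delta><..<t0+\<delta>}"
abbreviation "J \<equiv> {x0-\<delta><..<x0+\<delta>}"

lemma t0_in_I: "t0 \<in> I" and x0_in_J: "x0 \<in> J"
  using \<delta>_pos by auto

lemma square_in_D: "t \<in> I \<Longrightarrow> x \<in> J \<Longrightarrow> (t,x) \<in> D"
  using square_subset by blast

lemma has_real_derivative_x_square:
  "smooth_on D f \<Longrightarrow> t \<in> I \<Longrightarrow> x \<in> J \<Longrightarrow> ((\<lambda>r. f (t,r)) has_real_derivative d_x2 f (t,x)) (at x)"
  using has_real_derivative_d_x2 smooth_on_differentiable square_in_D by blast

lemma has_real_derivative_t_square:
  "smooth_on D f \<Longrightarrow> t \<in> I \<Longrightarrow> x \<in> J \<Longrightarrow> ((\<lambda>s. f (s,x)) has_real_derivative d_t2 f (t,x)) (at t)"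
  using has_real_derivative_d_t2 smooth_on_differentiable square_in_D by blast

lemma continuous_on_line:
  assumes "smooth_on D f"
  shows "continuous_on I (\<lambda>t. f (t,x0))"
  using DERIV_isCont[OF has_real_derivative_t_square[OF assms _ x0_in_J]]
  by (simp add: continuous_at_imp_continuous_on)

lemma reduced_symmetry_d_x:
  assumes rs: "reduced_symmetry A1 A2 I J W \<tau> \<tau>' \<tau>'' \<beta> \<beta>' k c" and t: "t \<in> I" and x: "x \<in> J"
  shows "\<tau>'' t + \<tau> t * d_x2 (d_t2 A1) (t,x) + \<tau>' t * d_x2 A1 (t,x)
    + ((\<tau>' t + k) * x + \<beta> t) * d_x2 (d_x2 A1) (t,x) = 0"
proof (rule DERIV_unique_on_open[OF _ DERIV_const _ x])
  note derivs = has_real_derivative_x_square[OF smooth_A1 t x]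
    has_real_derivative_x_square[OF smooth_on_d_t2[OF smooth_A1] t x]
    has_real_derivative_x_square[OF smooth_on_d_x2[OF smooth_A1] t x]
  show "((\<lambda>r. \<tau>'' t * r + \<beta>' t + \<tau> t * d_t2 A1 (t,r) + ((\<tau>' t + k) * r + \<beta> t) * d_x2 A1 (t,r)
      - k * A1 (t,r) - c) has_real_derivative
      \<tau>'' t + \<tau> t * d_x2 (d_t2 A1) (t,x) + \<tau>' t * d_x2 A1 (t,x)
        + ((\<tau>' t + k) * x + \<beta> t) * d_x2 (d_x2 A1) (t,x)) (at x)"
    by (rule derivs derivative_eq_intros | simp add: algebra_simps)+
qed (use reduced_symmetry_eq_A1[OF rs t] in auto)

lemma reduced_symmetry_d_xx:
  assumes rs: "reduced_symmetry A1 A2 I J W \<tau> \<tau>' \<tau>'' \<beta> \<beta>' k c" and t: "t \<in> I" and x: "x \<in> J"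
  shows "\<tau> t * d_x2 (d_x2 (d_t2 A1)) (t,x) + (2 * \<tau>' t + k) * d_x2 (d_x2 A1) (t,x)
    + ((\<tau>' t + k) * x + \<beta> t) * d_x2 (d_x2 (d_x2 A1)) (t,x) = 0"
proof (rule DERIV_unique_on_open[OF _ DERIV_const _ x])
  note derivs = has_real_derivative_x_square[OF smooth_on_d_x2[OF smooth_on_d_t2[OF smooth_A1]] t x]
    has_real_derivative_x_square[OF smooth_on_d_x2[OF smooth_A1] t x]
    has_real_derivative_x_square[OF smooth_on_d_x2[OF smooth_on_d_x2[OF smooth_A1]] t x]
  show "((\<lambda>r. \<tau>'' t + \<tau> t * d_x2 (d_t2 A1) (t,r) + \<tau>' t * d_x2 A1 (t,r)
      + ((\<tau>' t + k) * r + \<beta> t) * d_x2 (d_x2 A1) (t,r)) has_real_derivative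
      \<tau> t * d_x2 (d_x2 (d_t2 A1)) (t,x) + (2 * \<tau>' t + k) * d_x2 (d_x2 A1) (t,x)
        + ((\<tau>' t + k) * x + \<beta> t) * d_x2 (d_x2 (d_x2 A1)) (t,x)) (at x)"
    by (rule derivs derivative_eq_intros | simp add: algebra_simps)+
qed (use reduced_symmetry_d_x[OF rs t] in auto)

lemma reduced_symmetry_d_t_d_xx:
  assumes rs: "reduced_symmetry A1 A2 I J W \<tau> \<tau>' \<tau>'' \<beta> \<beta>' k c" and t: "t \<in> I" and x: "x \<in> J"
  shows "\<tau>' t * d_x2 (d_x2 (d_t2 A1)) (t,x) + \<tau> t * d_t2 (d_x2 (d_x2 (d_t2 A1))) (t,x)
    + 2 * \<tau>'' t * d_x2 (d_x2 A1) (t,x) + (2 * \<tau>' t + k) * d_t2 (d_x2 (d_x2 A1)) (t,x)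
    + (\<tau>'' t * x + \<beta>' t) * d_x2 (d_x2 (d_x2 A1)) (t,x)
    + ((\<tau>' t + k) * x + \<beta> t) * d_t2 (d_x2 (d_x2 (d_x2 A1))) (t,x) = 0"
proof (rule DERIV_unique_on_open[OF _ DERIV_const _ t])
  note derivs = has_real_derivative_t_square[OF smooth_on_d_x2[OF smooth_on_d_x2[OF smooth_on_d_t2[OF smooth_A1]]] t x]
    has_real_derivative_t_square[OF smooth_on_d_x2[OF smooth_on_d_x2[OF smooth_A1]] t x]
    has_real_derivative_t_square[OF smooth_on_d_x2[OF smooth_on_d_x2[OF smooth_on_d_x2[OF smooth_A1]]] t x]
    reduced_symmetry_has_real_derivative[OF rs t]
  show "((\<lambda>s. \<tau> s * d_x2 (d_x2 (d_t2 A1)) (s,x) + (2 * \<tau>' s + k) * d_x2 (d_x2 A1) (s,x)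
      + ((\<tau>' s + k) * x + \<beta> s) * d_x2 (d_x2 (d_x2 A1)) (s,x)) has_real_derivative
      \<tau>' t * d_x2 (d_x2 (d_t2 A1)) (t,x) + \<tau> t * d_t2 (d_x2 (d_x2 (d_t2 A1))) (t,x)
    + 2 * \<tau>'' t * d_x2 (d_x2 A1) (t,x) + (2 * \<tau>' t + k) * d_t2 (d_x2 (d_x2 A1)) (t,x)
    + (\<tau>'' t * x + \<beta>' t) * d_x2 (d_x2 (d_x2 A1)) (t,x)
    + ((\<tau>' t + k) * x + \<beta> t) * d_t2 (d_x2 (d_x2 (d_x2 A1))) (t,x)) (at t)"
    by (rule derivs derivative_eq_intros
        | simp add: algebra_simps)+
qed (use reduced_symmetry_d_xx[OF rs _ x] in auto)

lemma reduced_symmetry_unique_continuation: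
  assumes rs: "reduced_symmetry A1 A2 I J W \<tau> \<tau>' \<tau>'' \<beta> \<beta>' 0 0"
    and s: "s \<in> I" "\<tau> s = 0" "\<tau>' s = 0" "\<beta> s = 0" and t: "t \<in> I"
  shows "\<tau> t = 0 \<and> \<tau>' t = 0 \<and> \<beta> t = 0"
proof -
  define m1 m2 m3 n1 n2 n3 :: "real \<Rightarrow> real" where
    "m1 r = - d_x2 (d_t2 A1) (r,x0)" and "m2 r = - (d_x2 A1 (r,x0) + x0 * d_x2 (d_x2 A1) (r,x0))"
    and "m3 r = - d_x2 (d_x2 A1) (r,x0)"
    and "n1 r = x0 * d_x2 (d_t2 A1) (r,x0) - d_t2 A1 (r,x0)" and "n2 r = x0^2 * d_x2 (d_x2 A1) (r,x0)"
    and "n3 r = x0 * d_x2 (d_x2 A1) (r,x0) - d_x2 A1 (r,x0)" for r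
  have \<tau>'': "\<tau>'' r = m1 r * \<tau> r + m2 r * \<tau>' r + m3 r * \<beta> r" if "r \<in> I" for r
    using reduced_symmetry_d_x[OF rs that x0_in_J]
    unfolding m1_def m2_def m3_def by (simp add: algebra_simps)
  have \<beta>': "\<beta>' r = n1 r * \<tau> r + n2 r * \<tau>' r + n3 r * \<beta> r" if "r \<in> I" for r
    using reduced_symmetry_eq_A1[OF rs that x0_in_J] \<tau>''[OF that]
    unfolding m1_def m2_def m3_def n1_def n2_def n3_def by (simp add: algebra_simps power2_eq_square)
  define L where "L r = 1 + (\<bar>m1 r\<bar> + \<bar>m2 r\<bar> + \<bar>m3 r\<bar>) + (\<bar>n1 r\<bar> + \<bar>n2 r\<bar> + \<bar>n3 r\<bar>)" for r
  show ?thesis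
  proof (rule linear_growth_ode3_zero[where u = \<tau> and v = \<tau>' and w = \<beta> and u' = \<tau>'
        and v' = \<tau>'' and w' = \<beta>' and L = L, OF _ _ _ s t])
    fix r assume r: "r \<in> I"
    show "(\<tau> has_real_derivative \<tau>' r) (at r) \<and> (\<tau>' has_real_derivative \<tau>'' r) (at r) \<and>
        (\<beta> has_real_derivative \<beta>' r) (at r)"
      using reduced_symmetry_has_real_derivative[OF rs r] by blast
    let ?S = "\<bar>\<tau> r\<bar> + \<bar>\<tau>' r\<bar> + \<bar>\<beta> r\<bar>"
    have "\<bar>\<tau>' r\<bar> + \<bar>\<tau>'' r\<bar> + \<bar>\<beta>' r\<bar>
        \<le> ?S + (\<bar>m1 r\<bar> + \<bar>m2 r\<bar> + \<bar>m3 r\<bar>) * ?S + (\<bar>n1 r\<bar> + \<bar>n2 r\<bar> + \<bar>n3 r\<bar>) * ?S"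
      unfolding \<tau>''[OF r] \<beta>'[OF r] by (intro add_mono abs_lincomb3_le) simp
    also have "\<dots> = L r * ?S"
      unfolding L_def by (simp only: distrib_right mult_1)
    finally show "\<bar>\<tau>' r\<bar> + \<bar>\<tau>'' r\<bar> + \<bar>\<beta>' r\<bar> \<le> L r * ?S" .
  next
    note smooth = smooth_on_d_x2[OF smooth_on_d_t2[OF smooth_A1]] smooth_on_d_x2[OF smooth_A1]
      smooth_on_d_x2[OF smooth_on_d_x2[OF smooth_A1]] smooth_on_d_t2[OF smooth_A1]
    from continuous_on_line[OF smooth(1)] continuous_on_line[OF smooth(2)]
      continuous_on_line[OF smooth(3)] continuous_on_line[OF smooth(4)]
    show "continuous_on I L"
      unfolding L_def m1_def m2_def m3_def n1_def n2_def n3_def by (intro continuous_intros)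
  qed
qed

lemma reduced_symmetry_vanishes:
  assumes rs: "reduced_symmetry A1 A2 I J W \<tau> \<tau>' \<tau>'' \<beta> \<beta>' 0 0"
    and "s \<in> I" "\<tau> s = 0" "\<tau>' s = 0" "\<beta> s = 0" and "t \<in> I" "x \<in> J"
  shows "W (t,x,u) = 0"
  using reduced_symmetry_field[OF rs \<open>t \<in> I\<close> \<open>x \<in> J\<close>, of u]
    reduced_symmetry_unique_continuation[OF rs \<open>s \<in> I\<close> assms(3-6)]
  by (simp add: zero_prod_def)

lemma reduced_symmetry_rigid_at_point:
  assumes rs: "reduced_symmetry A1 A2 I J W \<tau> \<tau>' \<tau>'' \<beta> \<beta>' k c" and t: "t \<in> I" and x: "x \<in> J"
    and "A2 (t,x) \<noteq> 0" and "\<tau> t = 0" and "(\<tau>' t + k) * x + \<beta> t = 0"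
  shows "\<tau>' t = 0 \<and> k = 0 \<and> \<beta> t = 0"
proof -
  have "(2 * \<tau>' t + k) * d_x2 (d_x2 A1) (t,x) = 0"
    using reduced_symmetry_d_xx[OF rs t x] assms(5,6) by simp
  then have "2 * \<tau>' t + k = 0"
    using A1_xx_nonzero square_in_D[OF t x] by simp
  moreover have "(\<tau>' t + 2 * k) * A2 (t,x) = 0"
    using reduced_symmetry_eq_A2[OF rs t x] assms(5,6) by simp
  then have "\<tau>' t + 2 * k = 0"
    using assms(4) by simp
  ultimately have "\<tau>' t = 0" "k = 0"
    by linarith+
  then show ?thesis
    using assms(6) by simp
qed

lemma reduced_symmetry_const_times_A1_xxx:
  assumes rs: "reduced_symmetry A1 A2 I J W \<tau> \<tau>' \<tau>'' \<beta> \<beta>' 0 c" and t: "t \<in> I" and x: "x \<in> J"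
    and "\<tau> t = 0" "\<tau>' t = 0" "\<beta> t = 0"
  shows "c * d_x2 (d_x2 (d_x2 A1)) (t,x) = 0"
proof -
  have "\<tau>'' t = 0"
    using reduced_symmetry_d_x[OF rs t x] assms(4-6) by simp
  moreover have "\<beta>' t = c"
    using reduced_symmetry_eq_A1[OF rs t x] assms(4-6) \<open>\<tau>'' t = 0\<close> by simp
  ultimately show ?thesis
    using reduced_symmetry_d_t_d_xx[OF rs t x] assms(4-6) by simp
qed

lemma reduced_symmetry_const_eq_0:
  assumes rs: "reduced_symmetry A1 A2 I J W \<tau> \<tau>' \<tau>'' \<beta> \<beta>' 0 c" and "\<tau> t0 = 0"
    and A1_x3: "\<And>t. t \<in> I \<Longrightarrow> d_x2 (d_x2 (d_x2 A1)) (t,x0) = 0"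
  shows "c = 0"
proof -
  have G: "d_x2 (d_x2 A1) (t,x0) \<noteq> 0" if "t \<in> I" for t
    using A1_xx_nonzero square_in_D[OF that x0_in_J] by simp
  define m where "m t = - d_x2 (d_x2 (d_t2 A1)) (t,x0) / (2 * d_x2 (d_x2 A1) (t,x0))" for t
  have \<tau>': "\<tau>' t = m t * \<tau> t" if "t \<in> I" for t
    using reduced_symmetry_d_xx[OF rs that x0_in_J] A1_x3[OF that] G[OF that]
    unfolding m_def by (simp add: field_simps)
  have \<tau>_0: "\<tau> t = 0" if "t \<in> I" for t
  proof (rule linear_growth_ode_zero[where y = \<tau> and y' = \<tau>' and L = "\<lambda>t. \<bar>m t\<bar>"])
    fix r assume r: "r \<in> I"
    show "(\<tau> has_vector_derivative \<tau>' r) (at r)"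
      using reduced_symmetry_has_real_derivative(1)[OF rs r]
      by (simp add: has_real_derivative_iff_has_vector_derivative)
    show "norm (\<tau>' r) \<le> \<bar>m r\<bar> * norm (\<tau> r)"
      by (simp add: \<tau>'[OF r] abs_mult)
  next
    have "continuous_on I (\<lambda>t. d_x2 (d_x2 (d_t2 A1)) (t,x0))" "continuous_on I (\<lambda>t. d_x2 (d_x2 A1) (t,x0))"
      using continuous_on_line[OF smooth_on_d_x2[OF smooth_on_d_x2[OF smooth_on_d_t2[OF smooth_A1]]]]
        continuous_on_line[OF smooth_on_d_x2[OF smooth_on_d_x2[OF smooth_A1]]] .
    then show "continuous_on I (\<lambda>t. \<bar>m t\<bar>)"
      unfolding m_def using G by (intro continuous_intros) auto
  qed (use that assms(2) t0_in_I in auto)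
  have \<tau>'_0: "\<tau>' t = 0" if "t \<in> I" for t
    using \<tau>'[OF that] \<tau>_0[OF that] by simp
  have \<tau>''_0: "\<tau>'' t = 0" if "t \<in> I" for t
    using DERIV_unique_on_open[OF reduced_symmetry_has_real_derivative(2)[OF rs that] DERIV_const
        open_greaterThanLessThan that] \<tau>'_0 by simp
  have \<beta>_0: "\<beta> t = 0" if "t \<in> I" for t
    using reduced_symmetry_d_x[OF rs that x0_in_J] \<tau>_0[OF that] \<tau>'_0[OF that] \<tau>''_0[OF that] G[OF that]
    by simp
  have \<beta>'_0: "\<beta>' t = 0" if "t \<in> I" for t
    using DERIV_unique_on_open[OF reduced_symmetry_has_real_derivative(3)[OF rs that] DERIV_const
        open_greaterThanLessThan that] \<beta>_0 by simp
  show ?thesis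
    using reduced_symmetry_eq_A1[OF rs t0_in_I x0_in_J] \<tau>_0[OF t0_in_I] \<tau>'_0[OF t0_in_I]
      \<tau>''_0[OF t0_in_I] \<beta>_0[OF t0_in_I] \<beta>'_0[OF t0_in_I]
    by simp
qed

end

section \<open>Integrating the determining equations on a square\<close>

locale symmetry_on_square = symmetry_field D A1 A2 V + square_setting D A1 t0 x0 \<delta>
  for D A1 A2 V t0 x0 \<delta>
begin

lemma differentiable_square:
  "smooth_on (Omega D) f \<Longrightarrow> t \<in> I \<Longrightarrow> x \<in> J \<Longrightarrow> f differentiable (at (t,x,u))"
  using smooth_on_Omega_differentiable square_in_D by blast

definition "T t = \<tau> (t,x0,0)"
definition "T' t = d_t \<tau> (t,x0,0)"
definition "T'' t = d_t (d_t \<tau>) (t,x0,0)"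
definition "e t = d_u \<eta> (t,x0,0)"
definition "e' t = d_t (d_u \<eta>) (t,x0,0)"
definition "e'' t = d_t (d_t (d_u \<eta>)) (t,x0,0)"
definition "h t = \<eta> (t,x0,0)"

lemma has_real_derivative_T: "t \<in> I \<Longrightarrow> (T has_real_derivative T' t) (at t)"
  unfolding T_def[abs_def] T'_def
  by (rule has_real_derivative_d_t[OF differentiable_square[OF smooth_tau]]) (simp_all add: x0_in_J)

lemma has_real_derivative_T': "t \<in> I \<Longrightarrow> (T' has_real_derivative T'' t) (at t)"
  unfolding T'_def[abs_def] T''_def
  by (rule has_real_derivative_d_t[OF differentiable_square[OF smooth_on_d_t[OF smooth_tau]]])
    (simp_all add: x0_in_J)

lemma has_real_derivative_e: "t \<in> I \<Longrightarrow> (e has_real_derivative e' t) (at t)"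
  unfolding e_def[abs_def] e'_def
  by (rule has_real_derivative_d_t[OF differentiable_square[OF smooth_on_d_u[OF smooth_eta]]])
    (simp_all add: x0_in_J)

lemma has_real_derivative_e': "t \<in> I \<Longrightarrow> (e' has_real_derivative e'' t) (at t)"
  unfolding e'_def[abs_def] e''_def
  by (rule has_real_derivative_d_t[OF differentiable_square[OF smooth_on_d_t[OF smooth_on_d_u[OF smooth_eta]]]])
    (simp_all add: x0_in_J)

lemma has_real_derivative_h: "t \<in> I \<Longrightarrow> (h has_real_derivative d_t \<eta> (t,x0,0)) (at t)"
  unfolding h_def[abs_def]
  by (rule has_real_derivative_d_t[OF differentiable_square[OF smooth_eta]]) (simp_all add: x0_in_J)

lemma tau_square: assumes "t \<in> I" "x \<in> J" shows "\<tau> (t,x,u) = T t"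
proof -
  have "\<tau> (t,x,0) = \<tau> (t,x0,0)"
  proof (rule DERIV_zero_eq_on_interval[OF _ \<open>x \<in> J\<close> x0_in_J])
    fix s assume "s \<in> J"
    show "((\<lambda>r. \<tau> (t,r,0)) has_real_derivative 0) (at s)"
      by (rule has_real_derivative_d_x[OF differentiable_square[OF smooth_tau assms(1) \<open>s \<in> J\<close>]])
        (simp add: d_x_tau_eq_0[OF square_in_D[OF assms(1) \<open>s \<in> J\<close>]])
  qed
  then show ?thesis
    using tau_indep_u[OF square_in_D[OF assms], of u] unfolding T_def by simp
qed

lemma d_t_tau_square: assumes "t \<in> I" "x \<in> J" shows "d_t \<tau> (t,x,u) = T' t"
proof -
  have "d_t \<tau> (t,x,0) = T' t"
    by (rule DERIV_unique_on_open[OF has_real_derivative_d_t[OF differentiable_square[OF smooth_tau assms] refl]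
          has_real_derivative_T[OF assms(1)] _ assms(1)])
      (auto simp: tau_square[OF _ assms(2)])
  then show ?thesis
    using d_t_tau_indep_u[OF square_in_D[OF assms], of u] by simp
qed

lemma d_u_eta_square: assumes "t \<in> I" "x \<in> J" shows "d_u \<eta> (t,x,u) = e t"
proof -
  have "d_u \<eta> (t,x,0) = d_u \<eta> (t,x0,0)"
  proof (rule DERIV_zero_eq_on_interval[OF _ \<open>x \<in> J\<close> x0_in_J])
    fix s assume "s \<in> J"
    show "((\<lambda>r. d_u \<eta> (t,r,0)) has_real_derivative 0) (at s)"
      by (rule has_real_derivative_d_x[OF
            differentiable_square[OF smooth_on_d_u[OF smooth_eta] assms(1) \<open>s \<in> J\<close>]])
        (simp add: d_x_d_u_eta_eq_0[OF square_in_D[OF assms(1) \<open>s \<in> J\<close>]])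
  qed
  then show ?thesis
    using d_u_eta_indep_u[OF square_in_D[OF assms], of u] unfolding e_def by simp
qed

lemma d_t_d_u_eta_square: assumes "t \<in> I" "x \<in> J" shows "d_t (d_u \<eta>) (t,x,0) = e' t"
  by (rule DERIV_unique_on_open[OF has_real_derivative_d_t[OF
        differentiable_square[OF smooth_on_d_u[OF smooth_eta] assms] refl]
        has_real_derivative_e[OF assms(1)] _ assms(1)])
    (auto simp: d_u_eta_square[OF _ assms(2)])

lemma d_x_eta_square: assumes "t \<in> I" "x \<in> J" shows "d_x \<eta> (t,x,0) = - e' t"
  using d_t_d_u_eta_eq[OF square_in_D[OF assms]] d_t_d_u_eta_square[OF assms] by simp

lemma eta_square_at_0: assumes "t \<in> I" "x \<in> J" shows "\<eta> (t,x,0) = h t - e' t * (x - x0)"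
proof -
  have "\<eta> (t,x,0) + e' t * x = \<eta> (t,x0,0) + e' t * x0"
  proof (rule DERIV_zero_eq_on_interval[where f = "\<lambda>r. \<eta> (t,r,0) + e' t * r", OF _ \<open>x \<in> J\<close> x0_in_J])
    fix s assume "s \<in> J"
    show "((\<lambda>r. \<eta> (t,r,0) + e' t * r) has_real_derivative 0) (at s)"
      by (rule derivative_eq_intros
          has_real_derivative_d_x[OF differentiable_square[OF smooth_eta assms(1) \<open>s \<in> J\<close>] refl]
          | simp add: d_x_eta_square[OF assms(1) \<open>s \<in> J\<close>])+
  qed
  then show ?thesis
    unfolding h_def by (simp add: algebra_simps)
qed

lemma d_xx_eta_square: assumes "t \<in> I" "x \<in> J" shows "d_x (d_x \<eta>) (t,x,0) = 0"
  by (rule DERIV_unique_on_open[OF has_real_derivative_d_x[OF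
        differentiable_square[OF smooth_on_d_x[OF smooth_eta] assms] refl]
        DERIV_const[of "- e' t"] _ assms(2)])
    (auto simp: d_x_eta_square[OF assms(1)])

lemma d_t_eta_square: assumes "t \<in> I" "x \<in> J" shows "d_t \<eta> (t,x,0) = - A1 (t,x) * e' t"
  using determining_free[OF square_in_D[OF assms], of 0] d_x_eta_square[OF assms]
    d_xx_eta_square[OF assms]
  by simp

text \<open>Computing \<open>\<partial>\<^sub>t \<eta>(t,x,0)\<close> in two ways makes \<open>A1\<close> affine in \<open>x\<close> unless \<open>e' t = 0\<close>,
  which is excluded by \<open>\<partial>\<^sub>x\<^sub>x A1 \<noteq> 0\<close>.\<close>

lemma e'_eq_0: assumes "t \<in> I" shows "e' t = 0"
proof -
  have A1_diff: "A1 differentiable (at (t,x))" "d_x2 A1 differentiable (at (t,x))" if "x \<in> J" for x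
    using smooth_on_differentiable[OF smooth_A1] smooth_on_differentiable[OF smooth_on_d_x2[OF smooth_A1]]
      square_in_D[OF assms that] by auto
  have affine: "A1 (t,x) * e' t = A1 (t,x0) * e' t + e'' t * (x - x0)" if "x \<in> J" for x
  proof -
    have "d_t \<eta> (t,x,0) = d_t \<eta> (t,x0,0) - e'' t * (x - x0)"
    proof (rule DERIV_unique_on_open[OF
          has_real_derivative_d_t[OF differentiable_square[OF smooth_eta assms that] refl] _ _ assms])
      show "((\<lambda>s. h s - e' s * (x - x0)) has_real_derivative d_t \<eta> (t,x0,0) - e'' t * (x - x0)) (at t)"
        by (rule derivative_eq_intros has_real_derivative_h has_real_derivative_e' assms refl | simp)+
    qed (auto simp: eta_square_at_0[OF _ that])
    then show ?thesis
      using d_t_eta_square[OF assms that] d_t_eta_square[OF assms x0_in_J] by (simp add: algebra_simps)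
  qed
  have slope: "d_x2 A1 (t,x) * e' t = e'' t" if "x \<in> J" for x
  proof -
    have "d_x2 A1 (t,x) * e' t - e'' t = 0"
    proof (rule DERIV_unique_on_open[OF _ DERIV_const _ that])
      show "((\<lambda>r. A1 (t,r) * e' t - A1 (t,x0) * e' t - e'' t * (r - x0)) has_real_derivative
          d_x2 A1 (t,x) * e' t - e'' t) (at x)"
        by (rule derivative_eq_intros has_real_derivative_d_x2[OF A1_diff(1)[OF that] refl] | simp)+
    qed (use affine in \<open>auto simp: algebra_simps\<close>)
    then show ?thesis by simp
  qed
  have "d_x2 (d_x2 A1) (t,x0) * e' t = 0"
  proof (rule DERIV_unique_on_open[OF _ DERIV_const _ x0_in_J])
    show "((\<lambda>r. d_x2 A1 (t,r) * e' t) has_real_derivative d_x2 (d_x2 A1) (t,x0) * e' t) (at x0)"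
      by (rule derivative_eq_intros has_real_derivative_d_x2[OF A1_diff(2)[OF x0_in_J] refl] | simp)+
  qed (use slope in auto)
  then show ?thesis
    using A1_xx_nonzero square_in_D[OF assms x0_in_J] by simp
qed

definition "k = e t0"
definition "c = h t0"
definition "b t = \<xi> (t,x0,0) - (k + T' t) * x0"
definition "b' t = d_t \<xi> (t,x0,0) - T'' t * x0"

lemma e_eq_k: "t \<in> I \<Longrightarrow> e t = k"
  unfolding k_def
  by (rule DERIV_zero_eq_on_interval[OF _ _ t0_in_I]) (use has_real_derivative_e e'_eq_0 in auto)

lemma h_eq_c: "t \<in> I \<Longrightarrow> h t = c"
  unfolding c_def
  by (rule DERIV_zero_eq_on_interval[OF _ _ t0_in_I])
    (use has_real_derivative_h d_t_eta_square x0_in_J e'_eq_0 in auto)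

lemma d_x_xi_square: assumes "t \<in> I" "x \<in> J" shows "d_x \<xi> (t,x,0) = k + T' t"
  using d_u_eta_eq[OF square_in_D[OF assms]] d_u_eta_square[OF assms] d_t_tau_square[OF assms]
    e_eq_k[OF assms(1)]
  by simp

lemma eta_square: assumes "t \<in> I" "x \<in> J" shows "\<eta> (t,x,u) = k * u + c"
  using eta_affine_u[OF square_in_D[OF assms], of u] eta_square_at_0[OF assms] e'_eq_0[OF assms(1)]
    h_eq_c[OF assms(1)] d_u_eta_square[OF assms, of 0] e_eq_k[OF assms(1)]
  by simp

lemma xi_square: assumes "t \<in> I" "x \<in> J" shows "\<xi> (t,x,u) = (T' t + k) * x + b t"
proof -
  have "\<xi> (t,x,0) - (k + T' t) * x = \<xi> (t,x0,0) - (k + T' t) * x0"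
  proof (rule DERIV_zero_eq_on_interval[where f = "\<lambda>r. \<xi> (t,r,0) - (k + T' t) * r", OF _ \<open>x \<in> J\<close> x0_in_J])
    fix s assume "s \<in> J"
    then show "((\<lambda>r. \<xi> (t,r,0) - (k + T' t) * r) has_real_derivative 0) (at s)"
      using assms
      by (intro derivative_eq_intros has_real_derivative_d_x differentiable_square smooth_xi)
        (auto simp: d_x_xi_square)
  qed
  then show ?thesis
    using xi_indep_u[OF square_in_D[OF assms], of u] unfolding b_def by (simp add: algebra_simps)
qed

lemma has_real_derivative_b: "t \<in> I \<Longrightarrow> (b has_real_derivative b' t) (at t)"
  unfolding b_def b'_def
  by (rule derivative_eq_intros has_real_derivative_d_t differentiable_square smooth_xi
      has_real_derivative_T' x0_in_J refl | assumption | simp)+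

lemma d_t_xi_square: assumes "t \<in> I" "x \<in> J" shows "d_t \<xi> (t,x,0) = T'' t * x + b' t"
proof (rule DERIV_unique_on_open[OF has_real_derivative_d_t _ _ \<open>t \<in> I\<close>])
  show "((\<lambda>s. (T' s + k) * x + b s) has_real_derivative T'' t * x + b' t) (at t)"
    by (rule derivative_eq_intros has_real_derivative_T' has_real_derivative_b assms refl | simp)+
qed (use assms in \<open>auto simp: xi_square intro: differentiable_square smooth_xi\<close>)

lemma d_xx_xi_square: assumes "t \<in> I" "x \<in> J" shows "d_x (d_x \<xi>) (t,x,0) = 0"
  by (rule DERIV_unique_on_open[OF has_real_derivative_d_x[OF
        differentiable_square[OF smooth_on_d_x[OF smooth_xi] assms] refl]
        DERIV_const[of "k + T' t"] _ assms(2)])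
    (use assms in \<open>auto simp: d_x_xi_square\<close>)

theorem reduced_symmetry_square: "reduced_symmetry A1 A2 I J V T T' T'' b b' k c"
  unfolding reduced_symmetry_def
proof (intro conjI ballI allI)
  fix t assume t: "t \<in> I"
  show "(T has_real_derivative T' t) (at t)" "(T' has_real_derivative T'' t) (at t)"
    "(b has_real_derivative b' t) (at t)"
    using t has_real_derivative_T has_real_derivative_T' has_real_derivative_b by auto
  fix x assume x: "x \<in> J"
  show "V (t,x,u) = (T t, (T' t + k) * x + b t, k * u + c)" for u
    using tau_square[OF t x, of u] xi_square[OF t x, of u] eta_square[OF t x, of u]
    unfolding tau_of_def xi_of_def eta_of_def by (simp add: prod_eq_iff)
  show "T'' t * x + b' t + T t * d_t2 A1 (t,x) + ((T' t + k) * x + b t) * d_x2 A1 (t,x)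
      - k * A1 (t,x) - c = 0"
    using determining_ux_at_0[OF square_in_D[OF t x]] tau_square[OF t x] xi_square[OF t x]
      eta_square[OF t x] d_x_xi_square[OF t x] d_t_tau_square[OF t x] d_t_xi_square[OF t x]
      d_xx_xi_square[OF t x]
    by (simp add: algebra_simps)
  show "(T' t + 2 * k) * A2 (t,x) - T t * d_t2 A2 (t,x) - ((T' t + k) * x + b t) * d_x2 A2 (t,x) = 0"
    using determining_uxx[OF square_in_D[OF t x], of 0] tau_square[OF t x] xi_square[OF t x]
      d_x_xi_square[OF t x] d_t_tau_square[OF t x]
    by (simp add: algebra_simps)
qed

end

section \<open>Three symmetries are linearly dependent\<close>

locale three_symmetries =
  fixes D :: "(real \<times> real) set" and A1 A2 :: "real \<times> real \<Rightarrow> real"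
    and V1 V2 V3 :: "real \<times> real \<times> real \<Rightarrow> real \<times> real \<times> real"
  assumes open_D: "open D" and connected_D: "connected D" and smooth_A1: "smooth_on D A1"
    and A2_nonzero: "\<forall>p\<in>D. A2 p \<noteq> 0" and A1_xx_nonzero: "\<forall>p\<in>D. d_x2 (d_x2 A1) p \<noteq> 0"
    and symmetries: "lie_symmetry D A1 A2 V1" "lie_symmetry D A1 A2 V2" "lie_symmetry D A1 A2 V3"
begin

definition "comb a1 a2 a3 p = a1 *\<^sub>R V1 p + a2 *\<^sub>R V2 p + a3 *\<^sub>R V3 p"

definition "vanishing_set a1 a2 a3 = {(t,x). \<forall>u. comb a1 a2 a3 (t,x,u) = 0}"

lemma reduced_symmetry_comb:
  assumes "square_setting D A1 t0 x0 \<delta>"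
  shows "\<exists>\<tau> \<tau>' \<tau>'' \<beta> \<beta>' k c. reduced_symmetry A1 A2 {t0-\<delta><..<t0+\<delta>} {x0-\<delta><..<x0+\<delta>}
    (comb a1 a2 a3) \<tau> \<tau>' \<tau>'' \<beta> \<beta>' k c"
proof -
  have "\<exists>\<tau> \<tau>' \<tau>'' \<beta> \<beta>' k c. reduced_symmetry A1 A2 {t0-\<delta><..<t0+\<delta>} {x0-\<delta><..<x0+\<delta>}
      V \<tau> \<tau>' \<tau>'' \<beta> \<beta>' k c" if "lie_symmetry D A1 A2 V" for V
  proof -
    interpret symmetry_on_square D A1 A2 V t0 x0 \<delta>
      using assms that open_D A2_nonzero by (simp add: symmetry_on_square_def symmetry_field_def)
    show ?thesis
      using reduced_symmetry_square by blast
  qed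
  then obtain \<tau>1 \<tau>1' \<tau>1'' \<beta>1 \<beta>1' k1 c1 \<tau>2 \<tau>2' \<tau>2'' \<beta>2 \<beta>2' k2 c2 \<tau>3 \<tau>3' \<tau>3'' \<beta>3 \<beta>3' k3 c3 where
    "reduced_symmetry A1 A2 {t0-\<delta><..<t0+\<delta>} {x0-\<delta><..<x0+\<delta>} V1 \<tau>1 \<tau>1' \<tau>1'' \<beta>1 \<beta>1' k1 c1"
    "reduced_symmetry A1 A2 {t0-\<delta><..<t0+\<delta>} {x0-\<delta><..<x0+\<delta>} V2 \<tau>2 \<tau>2' \<tau>2'' \<beta>2 \<beta>2' k2 c2"
    "reduced_symmetry A1 A2 {t0-\<delta><..<t0+\<delta>} {x0-\<delta><..<x0+\<delta>} V3 \<tau>3 \<tau>3' \<tau>3'' \<beta>3 \<beta>3' k3 c3"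
    using symmetries by meson
  from reduced_symmetry_lincomb[OF this] show ?thesis
    unfolding comb_def[abs_def] .
qed

lemma square_vanishing_of_interior_point:
  assumes sq: "square_setting D A1 t0 x0 \<delta>"
    and q: "q \<in> {t0-\<delta><..<t0+\<delta>} \<times> {x0-\<delta><..<x0+\<delta>} \<inter> interior (vanishing_set a1 a2 a3)"
  shows "{t0-\<delta><..<t0+\<delta>} \<times> {x0-\<delta><..<x0+\<delta>} \<subseteq> vanishing_set a1 a2 a3"
proof -
  interpret square_setting D A1 t0 x0 \<delta> by (fact sq)
  obtain \<tau> \<tau>' \<tau>'' \<beta> \<beta>' k c where rs: "reduced_symmetry A1 A2 I J (comb a1 a2 a3) \<tau> \<tau>' \<tau>'' \<beta> \<beta>' k c"
    using reduced_symmetry_comb[OF sq] by blast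
  obtain t1 x1 where q_eq: "q = (t1,x1)" and t1: "t1 \<in> I" and x1: "x1 \<in> J"
    using q by auto
  obtain e where e: "e > 0" "ball (t1,x1) e \<subseteq> vanishing_set a1 a2 a3"
    using q q_eq by (auto simp: mem_interior)
  have components: "\<tau> s = 0 \<and> (\<tau>' s + k) * x1 + \<beta> s = 0 \<and> k * u + c = 0"
    if "s \<in> I" "dist t1 s < e" for s u
  proof -
    have "(s,x1) \<in> ball (t1,x1) e"
      using that by (simp add: dist_Pair_Pair)
    then have "comb a1 a2 a3 (s,x1,u) = 0"
      using e(2) by (auto simp: vanishing_set_def)
    then show ?thesis
      using reduced_symmetry_field[OF rs that(1) x1, of u] by (simp add: zero_prod_def)
  qed
  have "\<tau>' t1 = 0"
    by (rule DERIV_unique_on_open[OF reduced_symmetry_has_real_derivative(1)[OF rs t1] DERIV_const,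
          of "I \<inter> ball t1 e"]) (use t1 e components in auto)
  have "c = 0"
    using components[OF t1, of 0] e(1) by simp
  have "k = 0"
    using components[OF t1, of 1] e(1) \<open>c = 0\<close> by simp
  have "\<tau> t1 = 0" "\<beta> t1 = 0"
    using components[OF t1, of 0] e(1) \<open>\<tau>' t1 = 0\<close> \<open>k = 0\<close> by simp_all
  show ?thesis
  proof clarify
    fix t x assume "t \<in> I" "x \<in> J"
    then show "(t,x) \<in> vanishing_set a1 a2 a3"
      using reduced_symmetry_vanishes[OF rs[unfolded \<open>k = 0\<close> \<open>c = 0\<close>] t1
          \<open>\<tau> t1 = 0\<close> \<open>\<tau>' t1 = 0\<close> \<open>\<beta> t1 = 0\<close>]
      by (simp add: vanishing_set_def)
  qed
qed

lemma comb_vanishes_of_interior_point: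
  assumes "D \<inter> interior (vanishing_set a1 a2 a3) \<noteq> {}"
  shows "\<forall>p\<in>Omega D. comb a1 a2 a3 p = 0"
proof -
  have "D \<subseteq> vanishing_set a1 a2 a3"
  proof (rule connected_subset_propagation[OF connected_D _ assms])
    fix q assume "q \<in> D"
    obtain t0 x0 where q: "q = (t0,x0)"
      by (cases q)
    obtain \<delta> where "\<delta> > 0" and sq: "{t0-\<delta><..<t0+\<delta>} \<times> {x0-\<delta><..<x0+\<delta>} \<subseteq> D"
      using open_contains_square[OF open_D] \<open>q \<in> D\<close> q by blast
    then have setting: "square_setting D A1 t0 x0 \<delta>"
      using smooth_A1 A1_xx_nonzero by unfold_locales
    show "\<exists>B. open B \<and> q \<in> B \<and> (B \<inter> interior (vanishing_set a1 a2 a3) \<noteq> {} \<longrightarrow>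
        B \<subseteq> vanishing_set a1 a2 a3)"
    proof (intro exI conjI impI)
      show "open ({t0-\<delta><..<t0+\<delta>} \<times> {x0-\<delta><..<x0+\<delta>})"
        by (simp add: open_Times)
      show "q \<in> {t0-\<delta><..<t0+\<delta>} \<times> {x0-\<delta><..<x0+\<delta>}"
        using q \<open>\<delta> > 0\<close> by simp
      assume "{t0-\<delta><..<t0+\<delta>} \<times> {x0-\<delta><..<x0+\<delta>} \<inter> interior (vanishing_set a1 a2 a3) \<noteq> {}"
      then show "{t0-\<delta><..<t0+\<delta>} \<times> {x0-\<delta><..<x0+\<delta>} \<subseteq> vanishing_set a1 a2 a3"
        using square_vanishing_of_interior_point[OF setting] by blast
    qed
  qed
  then show ?thesis
    by (auto simp: Omega_def vanishing_set_def)
qed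

lemma comb_vanishes_of_square:
  assumes sq: "square_setting D A1 t0 x0 \<delta>"
    and vanishing: "{t0-\<delta><..<t0+\<delta>} \<times> {x0-\<delta><..<x0+\<delta>} \<subseteq> vanishing_set a1 a2 a3"
  shows "\<forall>p\<in>Omega D. comb a1 a2 a3 p = 0"
proof -
  interpret square_setting D A1 t0 x0 \<delta> by (fact sq)
  have "I \<times> J \<subseteq> interior (vanishing_set a1 a2 a3)"
    using vanishing by (rule interior_maximal) (simp add: open_Times)
  then have "(t0,x0) \<in> D \<inter> interior (vanishing_set a1 a2 a3)"
    using t0_in_I x0_in_J square_in_D[OF t0_in_I x0_in_J] by blast
  then show ?thesis
    using comb_vanishes_of_interior_point by blast
qed

lemma rigid_combination:
  assumes independent: "\<not> (\<exists>c1 c2 c3. (c1, c2, c3) \<noteq> (0, 0, 0) \<and> (\<forall>p\<in>Omega D. comb c1 c2 c3 p = 0))"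
    and sq: "square_setting D A1 t0 x0 \<delta>" and t: "t \<in> {t0-\<delta><..<t0+\<delta>}"
  obtains a1 a2 a3 \<tau> \<tau>' \<tau>'' \<beta> \<beta>' c
  where "reduced_symmetry A1 A2 {t0-\<delta><..<t0+\<delta>} {x0-\<delta><..<x0+\<delta>} (comb a1 a2 a3) \<tau> \<tau>' \<tau>'' \<beta> \<beta>' 0 c"
    and "\<tau> t = 0" "\<tau>' t = 0" "\<beta> t = 0" "c \<noteq> 0"
proof -
  interpret square_setting D A1 t0 x0 \<delta> by (fact sq)
  obtain a1 a2 a3 where a: "(a1, a2, a3) \<noteq> (0, 0, 0)"
    "a1 * fst (V1 (t,x0,0)) + a2 * fst (V2 (t,x0,0)) + a3 * fst (V3 (t,x0,0)) = 0"
    "a1 * fst (snd (V1 (t,x0,0))) + a2 * fst (snd (V2 (t,x0,0))) + a3 * fst (snd (V3 (t,x0,0))) = 0"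
    using two_linear_equations_nontrivial_solution[of "fst (V1 (t,x0,0))" "fst (V2 (t,x0,0))"
        "fst (V3 (t,x0,0))" "fst (snd (V1 (t,x0,0)))" "fst (snd (V2 (t,x0,0)))" "fst (snd (V3 (t,x0,0)))"]
    by blast
  obtain \<tau> \<tau>' \<tau>'' \<beta> \<beta>' k c where rs: "reduced_symmetry A1 A2 I J (comb a1 a2 a3) \<tau> \<tau>' \<tau>'' \<beta> \<beta>' k c"
    using reduced_symmetry_comb[OF sq] by blast
  have "\<tau> t = fst (comb a1 a2 a3 (t,x0,0))" "(\<tau>' t + k) * x0 + \<beta> t = fst (snd (comb a1 a2 a3 (t,x0,0)))"
    using reduced_symmetry_field[OF rs t x0_in_J, of 0] by simp_all
  then have "\<tau> t = 0" "(\<tau>' t + k) * x0 + \<beta> t = 0"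
    using a(2,3) by (simp_all add: comb_def)
  moreover have "A2 (t,x0) \<noteq> 0"
    using A2_nonzero square_in_D[OF t x0_in_J] by simp
  ultimately have "\<tau>' t = 0" "k = 0" "\<beta> t = 0"
    using reduced_symmetry_rigid_at_point[OF rs t x0_in_J] by simp_all
  have "c \<noteq> 0"
  proof
    assume "c = 0"
    have "I \<times> J \<subseteq> vanishing_set a1 a2 a3"
    proof clarify
      fix s x assume "s \<in> I" "x \<in> J"
      then show "(s,x) \<in> vanishing_set a1 a2 a3"
        using reduced_symmetry_vanishes[OF rs[unfolded \<open>k = 0\<close> \<open>c = 0\<close>] t
            \<open>\<tau> t = 0\<close> \<open>\<tau>' t = 0\<close> \<open>\<beta> t = 0\<close>]
        by (simp add: vanishing_set_def)
    qed
    then have "\<forall>p\<in>Omega D. comb a1 a2 a3 p = 0"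
      by (rule comb_vanishes_of_square[OF sq])
    with a(1) independent show False
      by blast
  qed
  then show thesis
    using that[OF rs[unfolded \<open>k = 0\<close>] \<open>\<tau> t = 0\<close> \<open>\<tau>' t = 0\<close> \<open>\<beta> t = 0\<close>] by blast
qed

theorem linearly_dependent:
  "\<exists>c1 c2 c3. (c1, c2, c3) \<noteq> (0, 0, 0) \<and> (\<forall>p\<in>Omega D. comb c1 c2 c3 p = 0)"
proof (rule ccontr)
  assume independent: "\<not> ?thesis"
  have "D \<noteq> {}"
  proof
    assume "D = {}"
    then have "(1 :: real, 0 :: real, 0 :: real) \<noteq> (0, 0, 0) \<and> (\<forall>p\<in>Omega D. comb 1 0 0 p = 0)"
      by (simp add: Omega_def)
    with independent show False
      by blast
  qed
  then obtain t0 x0 where "(t0,x0) \<in> D"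
    by auto
  then obtain \<delta> where "\<delta> > 0" "{t0-\<delta><..<t0+\<delta>} \<times> {x0-\<delta><..<x0+\<delta>} \<subseteq> D"
    using open_contains_square[OF open_D] by blast
  then have sq: "square_setting D A1 t0 x0 \<delta>"
    using smooth_A1 A1_xx_nonzero by unfold_locales
  then interpret square_setting D A1 t0 x0 \<delta> .
  have "d_x2 (d_x2 (d_x2 A1)) (t,x0) = 0" if t: "t \<in> I" for t
  proof -
    obtain a1 a2 a3 \<tau> \<tau>' \<tau>'' \<beta> \<beta>' c
      where rs: "reduced_symmetry A1 A2 I J (comb a1 a2 a3) \<tau> \<tau>' \<tau>'' \<beta> \<beta>' 0 c"
        and "\<tau> t = 0" "\<tau>' t = 0" "\<beta> t = 0" "c \<noteq> 0"
      using rigid_combination[OF independent sq t] .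
    then show ?thesis
      using reduced_symmetry_const_times_A1_xxx[OF rs t x0_in_J] by simp
  qed
  moreover obtain a1 a2 a3 \<tau> \<tau>' \<tau>'' \<beta> \<beta>' c
    where "reduced_symmetry A1 A2 I J (comb a1 a2 a3) \<tau> \<tau>' \<tau>'' \<beta> \<beta>' 0 c"
      and "\<tau> t0 = 0" "\<tau>' t0 = 0" "\<beta> t0 = 0" "c \<noteq> 0"
    using rigid_combination[OF independent sq t0_in_I] .
  ultimately show False
    using reduced_symmetry_const_eq_0 by blast
qed

end

theorem corollary21:
  fixes D :: "(real \<times> real) set"
    and A1 A2 :: "real \<times> real \<Rightarrow> real"
  assumes "open D" and "connected D"
    and "smooth_on D A1" and "smooth_on D A2"
    and "\<forall>p\<in>D. A2 p \<noteq> 0"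
    and "\<forall>p\<in>D. d_x2 (d_x2 A1) p \<noteq> 0"
  shows "\<forall>V1 V2 V3. lie_symmetry D A1 A2 V1 \<and> lie_symmetry D A1 A2 V2 \<and> lie_symmetry D A1 A2 V3 \<longrightarrow>
           (\<exists>c1 c2 c3 :: real. (c1, c2, c3) \<noteq> (0, 0, 0) \<and>
              (\<forall>p \<in> Omega D. c1 *\<^sub>R V1 p + c2 *\<^sub>R V2 p + c3 *\<^sub>R V3 p = 0))"
proof (intro allI impI)
  fix V1 V2 V3
  assume "lie_symmetry D A1 A2 V1 \<and> lie_symmetry D A1 A2 V2 \<and> lie_symmetry D A1 A2 V3"
  then interpret three_symmetries D A1 A2 V1 V2 V3
    using assms by unfold_locales auto
  show "\<exists>c1 c2 c3 :: real. (c1, c2, c3) \<noteq> (0, 0, 0) \<and>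
      (\<forall>p \<in> Omega D. c1 *\<^sub>R V1 p + c2 *\<^sub>R V2 p + c3 *\<^sub>R V3 p = 0)"
    using linearly_dependent unfolding comb_def .
qed

end
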